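(* Let $\mathcal{B}$ be a bicategory and let $\mathcal{N}\mathcal{B}\colon(\Theta^2)^{\mathrm{op}}\to\mathbf{Set}$ be its nerve. Then $\mathcal{N}\mathcal{B}$ satisfies the Segal condition, so it is a Tamsamani–Simpson weak $2$-category: (i) for every $k\ge0$ the Segal map $S_k\colon\mathcal{N}\mathcal{B}(k,-)\to\mathcal{N}\mathcal{B}(1,-)\times_{\mathcal{N}\mathcal{B}(0,0)}\cdots\times_{\mathcal{N}\mathcal{B}(0,0)}\mathcal{N}\mathcal{B}(1,-)$ ($k$ factors) is contractible; and (ii) for all $j,k\ge0$ the Segal map $S_{j,k}\colon\mathcal{N}\mathcal{B}(j,k)\to\mathcal{N}\mathcal{B}(j,1)\times_{\mathcal{N}\mathcal{B}(j,0)}\cdots\times_{\mathcal{N}\mathcal{B}(j,0)}\mathcal{N}\mathcal{B}(j,1)$ ($k$ factors) is a bijection.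
   Context: $\Delta$ is the category of finite ordinals $[k]=\{0,\dots,k\}$ and order-preserving maps. $\Theta^2$ is the quotient of $\Delta\times\Delta$ obtained by identifying all objects $([0],[k])$, $k\ge0$, into one object (represented by $(0,0)$) and identifying morphisms $(\phi,\psi)$ and $(\phi,\psi')$ whenever $\phi$ factors through $[0]$; write objects as $(j,k)$. Let $\sigma,\tau\colon[0]\to[1]$ pick $0$ and $1$, and $\iota_i\colon[1]\to[k]$ ($1\le i\le k$) send $0\mapsto i-1$, $1\mapsto i$. Nerve of a bicategory $\mathcal{B}$ (composition $\circ$ of $1$-cells, horizontal $*$ and vertical $\cdot$ composition of $2$-cells, associator $s$, left/right unitors $l,r$): $\mathcal{N}\mathcal{B}(j,k)$ is the set of quadruples $\big((a_u)_{0\le u\le j},(f^z_{uv})_{0\le u<v\le j,\,0\le z\le k},(\alpha^z_{uv})_{0\le u<v\le j,\,1\le z\le k},(\iota^z_{uvw})_{0\le u<v<w\le j,\,0\le z\le k}\big)$ with $a_u$ objects, $f^z_{uv}\colon a_u\to a_v$ $1$-cells, $\alpha^z_{uv}\colon f^{z-1}_{uv}\Rightarrow f^z_{uv}$ $2$-cells, $\iota^z_{uvw}\colon f^z_{vw}\circ f^z_{uv}\Rightarrow f^z_{uw}$ invertible $2$-cells, satisfying (A1) $\iota^z_{uvw}\cdot(\alpha^z_{vw}*\alpha^z_{uv})=\alpha^z_{uw}\cdot\iota^{z-1}_{uvw}$ and (A2) $\iota^z_{uwx}\cdot(1*\iota^z_{uvw})\cdot s=\iota^z_{uvx}\cdot(\iota^z_{vwx}*1)$,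 with $s\colon(f^z_{wx}\circ f^z_{vw})\circ f^z_{uv}\Rightarrow f^z_{wx}\circ(f^z_{vw}\circ f^z_{uv})$ the associator. (For $j=0$ this is just an object $a_0$, consistent with the identification in $\Theta^2$.) For $(p,q)\colon(l,m)\to(j,k)$, $\mathcal{N}\mathcal{B}(p,q)$ sends such a quadruple to $\big((b_u),(g^z_{uv}),(\beta^z_{uv}),(\kappa^z_{uvw})\big)$ with $b_u=a_{p(u)}$; $g^z_{uv}=f^{q(z)}_{p(u)p(v)}$ if $p(u)\ne p(v)$ and $1_{a_{p(u)}}$ otherwise; $\beta^z_{uv}$ the vertical composite $\alpha^{q(z)}_{p(u)p(v)}\cdot\ldots\cdot\alpha^{q(z-1)+1}_{p(u)p(v)}$ if $p(u)\ne p(v)$ (an identity if $q(z-1)=q(z)$), and $1_{1_{a_{p(u)}}}$ if $p(u)=p(v)$; $\kappa^z_{uvw}$ equal to $\iota^{q(z)}_{p(u)p(v)p(w)}$ if $p(u),p(v),p(w)$ are distinct, to the unitor $1\circ g^z_{uv}\Rightarrow g^z_{uv}$ if $p(u)\ne p(v)=p(w)$, to the unitor $g^z_{vw}\circ1\Rightarrow g^z_{vw}$ if $p(u)=p(v)\ne p(w)$, and to $1_{1_{a_{p(u)}}}$ (modulo the unitor $1\circ1\cong1$) if all equal. Segal maps: for a presheaf $A$ on $\Theta^2$, $A(k,-)$ is a simplicial set (functor $\Delta^{\mathrm{op}}\to\mathbf{Set}$) and $A(0,-)$ is constant at $A(0,0)$. $S_k$ is the map of simplicial sets into the wide pullback of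 $k$ copies of $A(1,-)$ along $t=A(\tau,\mathrm{id})$ and $s=A(\sigma,\mathrm{id})$, with components $A(\iota_i,\mathrm{id})$. $S_{j,k}$ is the map into the wide pullback of $k$ copies of $A(j,1)$ along $t=A(\mathrm{id},\tau)$ and $s=A(\mathrm{id},\sigma)$ over $A(j,0)$, with components $A(\mathrm{id},\iota_i)$. A map $\alpha\colon A\to B$ of simplicial sets, with source/target maps $s=A(\sigma),t=A(\tau)\colon A_1\to A_0$, is contractible if $\alpha_0\colon A_0\to B_0$ is surjective and the induced map $A_1\to A_0\times_{B_0}B_1\times_{B_0}A_0$, $x\mapsto(s x,\alpha_1x,t x)$, is a bijection (i.e. $\alpha$ is surjective on $0$-cells and full and faithful on $1$-cells). A Tamsamani–Simpson weak $2$-category is a presheaf on $\Theta^2$ satisfying (i) and (ii) (the Segal condition). *)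

theory Defs
  imports Main
begin

section \<open>Bicategories (Benabou), as explicit data with carrier sets\<close>

text \<open>Conventions: comp1 B g f is g o f (f first); vcomp B beta alpha is the vertical
composite beta . alpha (alpha first); hcomp B beta alpha is beta * alpha where alpha is a
2-cell between 1-cells a -> b and beta between 1-cells b -> c, so that
dom (beta * alpha) = dom beta o dom alpha.  assoc B h g f : (h o g) o f => h o (g o f),
lunit B f : 1 o f => f, runit B f : f o 1 => f.\<close>

record ('o, 'a, 'c) bicat =
  Obj :: "'o set"
  Arr :: "'a set"
  Cell :: "'c set"
  src1 :: "'a \<Rightarrow> 'o"
  trg1 :: "'a \<Rightarrow> 'o"
  dom2 :: "'c \<Rightarrow> 'a"
  cod2 :: "'c \<Rightarrow> 'a"
  comp1 :: "'a \<Rightarrow> 'a \<Rightarrow> 'a"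
  id1 :: "'o \<Rightarrow> 'a"
  vcomp :: "'c \<Rightarrow> 'c \<Rightarrow> 'c"
  hcomp :: "'c \<Rightarrow> 'c \<Rightarrow> 'c"
  id2 :: "'a \<Rightarrow> 'c"
  bassoc :: "'a \<Rightarrow> 'a \<Rightarrow> 'a \<Rightarrow> 'c"
  lunit :: "'a \<Rightarrow> 'c"
  runit :: "'a \<Rightarrow> 'c"

definition iso2 :: "('o, 'a, 'c, 'm) bicat_scheme \<Rightarrow> 'c \<Rightarrow> bool" where
  "iso2 B \<alpha> \<longleftrightarrow> \<alpha> \<in> Cell B \<and>
     (\<exists>\<beta>\<in>Cell B. dom2 B \<beta> = cod2 B \<alpha> \<and> cod2 B \<beta> = dom2 B \<alpha> \<and>
        vcomp B \<beta> \<alpha> = id2 B (dom2 B \<alpha>) \<and> vcomp B \<alpha> \<beta> = id2 B (cod2 B \<alpha>))"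

locale bicategory =
  fixes B :: "('o, 'a, 'c, 'm) bicat_scheme"
  assumes arr_ends: "\<And>f. f \<in> Arr B \<Longrightarrow> src1 B f \<in> Obj B \<and> trg1 B f \<in> Obj B"
    and id1_type: "\<And>a. a \<in> Obj B \<Longrightarrow>
          id1 B a \<in> Arr B \<and> src1 B (id1 B a) = a \<and> trg1 B (id1 B a) = a"
    and comp1_type: "\<And>f g. \<lbrakk>f \<in> Arr B; g \<in> Arr B; trg1 B f = src1 B g\<rbrakk> \<Longrightarrow>
          comp1 B g f \<in> Arr B \<and> src1 B (comp1 B g f) = src1 B f \<and> trg1 B (comp1 B g f) = trg1 B g"
    and cell_type: "\<And>\<alpha>. \<alpha> \<in> Cell B \<Longrightarrow>
          dom2 B \<alpha> \<in> Arr B \<and> cod2 B \<alpha> \<in> Arr B \<and>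
          src1 B (dom2 B \<alpha>) = src1 B (cod2 B \<alpha>) \<and> trg1 B (dom2 B \<alpha>) = trg1 B (cod2 B \<alpha>)"
    and id2_type: "\<And>f. f \<in> Arr B \<Longrightarrow> id2 B f \<in> Cell B \<and> dom2 B (id2 B f) = f \<and> cod2 B (id2 B f) = f"
    and vcomp_type: "\<And>\<alpha> \<beta>. \<lbrakk>\<alpha> \<in> Cell B; \<beta> \<in> Cell B; cod2 B \<alpha> = dom2 B \<beta>\<rbrakk> \<Longrightarrow>
          vcomp B \<beta> \<alpha> \<in> Cell B \<and> dom2 B (vcomp B \<beta> \<alpha>) = dom2 B \<alpha> \<and> cod2 B (vcomp B \<beta> \<alpha>) = cod2 B \<beta>"
    and vcomp_assoc: "\<And>\<alpha> \<beta> \<gamma>. \<lbrakk>\<alpha> \<in> Cell B; \<beta> \<in> Cell B; \<gamma> \<in> Cell B;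
          cod2 B \<alpha> = dom2 B \<beta>; cod2 B \<beta> = dom2 B \<gamma>\<rbrakk> \<Longrightarrow>
          vcomp B \<gamma> (vcomp B \<beta> \<alpha>) = vcomp B (vcomp B \<gamma> \<beta>) \<alpha>"
    and vcomp_id_left: "\<And>\<alpha>. \<alpha> \<in> Cell B \<Longrightarrow> vcomp B (id2 B (cod2 B \<alpha>)) \<alpha> = \<alpha>"
    and vcomp_id_right: "\<And>\<alpha>. \<alpha> \<in> Cell B \<Longrightarrow> vcomp B \<alpha> (id2 B (dom2 B \<alpha>)) = \<alpha>"
    and hcomp_type: "\<And>\<alpha> \<beta>. \<lbrakk>\<alpha> \<in> Cell B; \<beta> \<in> Cell B; trg1 B (dom2 B \<alpha>) = src1 B (dom2 B \<beta>)\<rbrakk> \<Longrightarrow>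
          hcomp B \<beta> \<alpha> \<in> Cell B \<and> dom2 B (hcomp B \<beta> \<alpha>) = comp1 B (dom2 B \<beta>) (dom2 B \<alpha>) \<and>
          cod2 B (hcomp B \<beta> \<alpha>) = comp1 B (cod2 B \<beta>) (cod2 B \<alpha>)"
    and hcomp_id: "\<And>f g. \<lbrakk>f \<in> Arr B; g \<in> Arr B; trg1 B f = src1 B g\<rbrakk> \<Longrightarrow>
          hcomp B (id2 B g) (id2 B f) = id2 B (comp1 B g f)"
    and interchange: "\<And>\<alpha> \<alpha>' \<beta> \<beta>'. \<lbrakk>\<alpha> \<in> Cell B; \<alpha>' \<in> Cell B; \<beta> \<in> Cell B; \<beta>' \<in> Cell B;
          cod2 B \<alpha> = dom2 B \<alpha>'; cod2 B \<beta> = dom2 B \<beta>'; trg1 B (dom2 B \<alpha>) = src1 B (dom2 B \<beta>)\<rbrakk> \<Longrightarrow>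
          hcomp B (vcomp B \<beta>' \<beta>) (vcomp B \<alpha>' \<alpha>) = vcomp B (hcomp B \<beta>' \<alpha>') (hcomp B \<beta> \<alpha>)"
    and assoc_type: "\<And>f g h. \<lbrakk>f \<in> Arr B; g \<in> Arr B; h \<in> Arr B; trg1 B f = src1 B g; trg1 B g = src1 B h\<rbrakk> \<Longrightarrow>
          iso2 B (bassoc B h g f) \<and> dom2 B (bassoc B h g f) = comp1 B (comp1 B h g) f \<and>
          cod2 B (bassoc B h g f) = comp1 B h (comp1 B g f)"
    and assoc_natural: "\<And>\<alpha> \<beta> \<gamma>. \<lbrakk>\<alpha> \<in> Cell B; \<beta> \<in> Cell B; \<gamma> \<in> Cell B;
          trg1 B (dom2 B \<alpha>) = src1 B (dom2 B \<beta>); trg1 B (dom2 B \<beta>) = src1 B (dom2 B \<gamma>)\<rbrakk> \<Longrightarrow>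
          vcomp B (bassoc B (cod2 B \<gamma>) (cod2 B \<beta>) (cod2 B \<alpha>)) (hcomp B (hcomp B \<gamma> \<beta>) \<alpha>) =
          vcomp B (hcomp B \<gamma> (hcomp B \<beta> \<alpha>)) (bassoc B (dom2 B \<gamma>) (dom2 B \<beta>) (dom2 B \<alpha>))"
    and lunit_type: "\<And>f. f \<in> Arr B \<Longrightarrow> iso2 B (lunit B f) \<and>
          dom2 B (lunit B f) = comp1 B (id1 B (trg1 B f)) f \<and> cod2 B (lunit B f) = f"
    and lunit_natural: "\<And>\<alpha>. \<alpha> \<in> Cell B \<Longrightarrow>
          vcomp B (lunit B (cod2 B \<alpha>)) (hcomp B (id2 B (id1 B (trg1 B (dom2 B \<alpha>)))) \<alpha>) =
          vcomp B \<alpha> (lunit B (dom2 B \<alpha>))"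
    and runit_type: "\<And>f. f \<in> Arr B \<Longrightarrow> iso2 B (runit B f) \<and>
          dom2 B (runit B f) = comp1 B f (id1 B (src1 B f)) \<and> cod2 B (runit B f) = f"
    and runit_natural: "\<And>\<alpha>. \<alpha> \<in> Cell B \<Longrightarrow>
          vcomp B (runit B (cod2 B \<alpha>)) (hcomp B \<alpha> (id2 B (id1 B (src1 B (dom2 B \<alpha>))))) =
          vcomp B \<alpha> (runit B (dom2 B \<alpha>))"
    and pentagon: "\<And>f g h k. \<lbrakk>f \<in> Arr B; g \<in> Arr B; h \<in> Arr B; k \<in> Arr B;
          trg1 B f = src1 B g; trg1 B g = src1 B h; trg1 B h = src1 B k\<rbrakk> \<Longrightarrow>
          vcomp B (bassoc B k h (comp1 B g f)) (bassoc B (comp1 B k h) g f) =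
          vcomp B (hcomp B (id2 B k) (bassoc B h g f))
            (vcomp B (bassoc B k (comp1 B h g) f) (hcomp B (bassoc B k h g) (id2 B f)))"
    and triangle: "\<And>f g. \<lbrakk>f \<in> Arr B; g \<in> Arr B; trg1 B f = src1 B g\<rbrakk> \<Longrightarrow>
          vcomp B (hcomp B (id2 B g) (lunit B f)) (bassoc B g (id1 B (trg1 B f)) f) =
          hcomp B (runit B g) (id2 B f)"

section \<open>The nerve of a bicategory\<close>

text \<open>An element of NB(j,k) is a quadruple (a, f, alpha, iota) with
 a u = a_u, f z u v = f^z_{uv}, alpha z u v = alpha^z_{uv}, iota z u v w = iota^z_{uvw};
 entries outside the index ranges are fixed to undefined (so the sets are exactly the
 sets of quadruples of the paper).\<close>

datatype ('o, 'a, 'c) ncell =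
  NCell "nat \<Rightarrow> 'o" "nat \<Rightarrow> nat \<Rightarrow> nat \<Rightarrow> 'a" "nat \<Rightarrow> nat \<Rightarrow> nat \<Rightarrow> 'c" "nat \<Rightarrow> nat \<Rightarrow> nat \<Rightarrow> nat \<Rightarrow> 'c"

definition nerve_data ::
  "('o, 'a, 'c, 'm) bicat_scheme \<Rightarrow> nat \<Rightarrow> nat \<Rightarrow> (nat \<Rightarrow> 'o) \<Rightarrow> (nat \<Rightarrow> nat \<Rightarrow> nat \<Rightarrow> 'a)
     \<Rightarrow> (nat \<Rightarrow> nat \<Rightarrow> nat \<Rightarrow> 'c) \<Rightarrow> (nat \<Rightarrow> nat \<Rightarrow> nat \<Rightarrow> nat \<Rightarrow> 'c) \<Rightarrow> bool" where
  "nerve_data B j k a f al io \<longleftrightarrow>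
    (\<forall>u. if u \<le> j then a u \<in> Obj B else a u = undefined) \<and>
    (\<forall>z u v. if u < v \<and> v \<le> j \<and> z \<le> k
       then f z u v \<in> Arr B \<and> src1 B (f z u v) = a u \<and> trg1 B (f z u v) = a v
       else f z u v = undefined) \<and>
    (\<forall>z u v. if u < v \<and> v \<le> j \<and> 1 \<le> z \<and> z \<le> k
       then al z u v \<in> Cell B \<and> dom2 B (al z u v) = f (z - 1) u v \<and> cod2 B (al z u v) = f z u v
       else al z u v = undefined) \<and>
    (\<forall>z u v w. if u < v \<and> v < w \<and> w \<le> j \<and> z \<le> k
       then iso2 B (io z u v w) \<and> dom2 B (io z u v w) = comp1 B (f z v w) (f z u v) \<and>
            cod2 B (io z u v w) = f z u w
       else io z u v w = undefined) \<and>
    \<comment> \<open>(A1)\<close>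
    (\<forall>z u v w. u < v \<and> v < w \<and> w \<le> j \<and> 1 \<le> z \<and> z \<le> k \<longrightarrow>
       vcomp B (io z u v w) (hcomp B (al z v w) (al z u v)) = vcomp B (al z u w) (io (z - 1) u v w)) \<and>
    \<comment> \<open>(A2)\<close>
    (\<forall>z u v w x. u < v \<and> v < w \<and> w < x \<and> x \<le> j \<and> z \<le> k \<longrightarrow>
       vcomp B (io z u w x) (vcomp B (hcomp B (id2 B (f z w x)) (io z u v w))
                                 (bassoc B (f z w x) (f z v w) (f z u v))) =
       vcomp B (io z u v x) (hcomp B (io z v w x) (id2 B (f z u v))))"

definition NB :: "('o, 'a, 'c, 'm) bicat_scheme \<Rightarrow> nat \<Rightarrow> nat \<Rightarrow> ('o, 'a, 'c) ncell set" where
  "NB B j k = {NCell a f al io | a f al io. nerve_data B j k a f al io}"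

text \<open>vseg B al fl a b is the vertical composite al b . ... . al (a+1) (for a < b),
 and the identity 2-cell on fl b if b \<le> a.\<close>

fun vseg :: "('o, 'a, 'c, 'm) bicat_scheme \<Rightarrow> (nat \<Rightarrow> 'c) \<Rightarrow> (nat \<Rightarrow> 'a) \<Rightarrow> nat \<Rightarrow> nat \<Rightarrow> 'c" where
  "vseg B al fl a 0 = id2 B (fl 0)"
| "vseg B al fl a (Suc n) =
     (if Suc n \<le> a then id2 B (fl (Suc n))
      else if n = a then al (Suc n)
      else vcomp B (al (Suc n)) (vseg B al fl a n))"

text \<open>Action of a morphism (p,q) : (l,m) -> (j,k) of Theta^2 (p : [l] -> [j], q : [m] -> [k]
 monotone), NB(p,q) : NB(j,k) -> NB(l,m), as in the paper.\<close>

definition nerve_map :: "('o, 'a, 'c, 'm) bicat_scheme \<Rightarrow> nat \<Rightarrow> nat \<Rightarrow> (nat \<Rightarrow> nat) \<Rightarrow> (nat \<Rightarrow> nat)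
    \<Rightarrow> ('o, 'a, 'c) ncell \<Rightarrow> ('o, 'a, 'c) ncell" where
  "nerve_map B l m p q x = (case x of NCell a f al io \<Rightarrow>
     let b = (\<lambda>u. if u \<le> l then a (p u) else undefined);
         g = (\<lambda>z u v. if u < v \<and> v \<le> l \<and> z \<le> m then
                (if p u \<noteq> p v then f (q z) (p u) (p v) else id1 B (a (p u)))
              else undefined);
         be = (\<lambda>z u v. if u < v \<and> v \<le> l \<and> 1 \<le> z \<and> z \<le> m then
                (if p u \<noteq> p v then vseg B (\<lambda>n. al n (p u) (p v)) (\<lambda>n. f n (p u) (p v)) (q (z - 1)) (q z)
                 else id2 B (id1 B (a (p u))))
              else undefined);
         ka = (\<lambda>z u v w. if u < v \<and> v < w \<and> w \<le> l \<and> z \<le> m then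
                (if p u \<noteq> p v \<and> p v \<noteq> p w \<and> p u \<noteq> p w then io (q z) (p u) (p v) (p w)
                 else if p u \<noteq> p v \<and> p v = p w then lunit B (g z u v)
                 else if p u = p v \<and> p v \<noteq> p w then runit B (g z v w)
                 else lunit B (id1 B (a (p u))))
              else undefined)
     in NCell b g be ka)"

section \<open>Segal maps and the Tamsamani--Simpson conditions for a presheaf on Theta^2\<close>

text \<open>A presheaf on Theta^2 is given by its sets A j k and its action act l m p q : A(j,k) -> A(l,m)
 for (p,q) : (l,m) -> (j,k).\<close>

definition sigma0 :: "nat \<Rightarrow> nat" where "sigma0 = (\<lambda>_. 0)"
definition tau0 :: "nat \<Rightarrow> nat" where "tau0 = (\<lambda>_. 1)"
definition iota :: "nat \<Rightarrow> nat \<Rightarrow> nat" where "iota i = (\<lambda>u. i - 1 + u)"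

text \<open>Wide pullback of k copies of X -> Bs (along t, s): we record the k elements together with
 the k+1 base points they connect (for k \<ge> 1 the base points are determined by the elements;
 for k = 0 the wide pullback is the base itself).\<close>

definition wpb :: "'x set \<Rightarrow> 'b set \<Rightarrow> ('x \<Rightarrow> 'b) \<Rightarrow> ('x \<Rightarrow> 'b) \<Rightarrow> nat \<Rightarrow> ('x list \<times> 'b list) set" where
  "wpb X Bs s t k = {(xs, bs). length xs = k \<and> length bs = Suc k \<and> set xs \<subseteq> X \<and> set bs \<subseteq> Bs \<and>
      (\<forall>i<k. s (xs ! i) = bs ! i \<and> t (xs ! i) = bs ! Suc i)}"

text \<open>Contractibility of a map alpha : A -> B of simplicial sets (only degrees 0,1 matter).\<close>

definition contractible ::
  "'x set \<Rightarrow> 'x set \<Rightarrow> ('x \<Rightarrow> 'x) \<Rightarrow> ('x \<Rightarrow> 'x) \<Rightarrow> 'y set \<Rightarrow> 'y set \<Rightarrow> ('y \<Rightarrow> 'y) \<Rightarrow> ('y \<Rightarrow> 'y)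
     \<Rightarrow> ('x \<Rightarrow> 'y) \<Rightarrow> ('x \<Rightarrow> 'y) \<Rightarrow> bool" where
  "contractible A0 A1 sA tA B0 B1 sB tB al0 al1 \<longleftrightarrow>
     al0 ` A0 = B0 \<and>
     bij_betw (\<lambda>x. (sA x, al1 x, tA x)) A1
       {(a, b, a'). a \<in> A0 \<and> b \<in> B1 \<and> a' \<in> A0 \<and> sB b = al0 a \<and> tB b = al0 a'}"

text \<open>Segal map S_k in simplicial degree n: NB(k,n) -> wide pullback of A(1,n) over A(0,0).\<close>

definition segal_map_1 :: "(nat \<Rightarrow> nat \<Rightarrow> (nat \<Rightarrow> nat) \<Rightarrow> (nat \<Rightarrow> nat) \<Rightarrow> 'x \<Rightarrow> 'x) \<Rightarrow> nat \<Rightarrow> nat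
    \<Rightarrow> 'x \<Rightarrow> 'x list \<times> 'x list" where
  "segal_map_1 act k n x =
     (map (\<lambda>i. act 1 n (iota i) id x) [1..<Suc k], map (\<lambda>i. act 0 0 (\<lambda>_. i) (\<lambda>_. 0) x) [0..<Suc k])"

definition segal_cond_1 :: "(nat \<Rightarrow> nat \<Rightarrow> 'x set) \<Rightarrow> (nat \<Rightarrow> nat \<Rightarrow> (nat \<Rightarrow> nat) \<Rightarrow> (nat \<Rightarrow> nat) \<Rightarrow> 'x \<Rightarrow> 'x)
    \<Rightarrow> nat \<Rightarrow> bool" where
  "segal_cond_1 A act k \<longleftrightarrow>
     contractible (A k 0) (A k 1) (act k 0 id sigma0) (act k 0 id tau0)
       (wpb (A 1 0) (A 0 0) (act 0 0 sigma0 (\<lambda>_. 0)) (act 0 0 tau0 (\<lambda>_. 0)) k)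
       (wpb (A 1 1) (A 0 0) (act 0 0 sigma0 (\<lambda>_. 0)) (act 0 0 tau0 (\<lambda>_. 0)) k)
       (\<lambda>(xs, bs). (map (act 1 0 id sigma0) xs, bs))
       (\<lambda>(xs, bs). (map (act 1 0 id tau0) xs, bs))
       (segal_map_1 act k 0) (segal_map_1 act k 1)"

definition segal_map_2 :: "(nat \<Rightarrow> nat \<Rightarrow> (nat \<Rightarrow> nat) \<Rightarrow> (nat \<Rightarrow> nat) \<Rightarrow> 'x \<Rightarrow> 'x) \<Rightarrow> nat \<Rightarrow> nat
    \<Rightarrow> 'x \<Rightarrow> 'x list \<times> 'x list" where
  "segal_map_2 act j k x =
     (map (\<lambda>i. act j 1 id (iota i) x) [1..<Suc k], map (\<lambda>i. act j 0 id (\<lambda>_. i) x) [0..<Suc k])"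

definition segal_cond_2 :: "(nat \<Rightarrow> nat \<Rightarrow> 'x set) \<Rightarrow> (nat \<Rightarrow> nat \<Rightarrow> (nat \<Rightarrow> nat) \<Rightarrow> (nat \<Rightarrow> nat) \<Rightarrow> 'x \<Rightarrow> 'x)
    \<Rightarrow> nat \<Rightarrow> nat \<Rightarrow> bool" where
  "segal_cond_2 A act j k \<longleftrightarrow>
     bij_betw (segal_map_2 act j k) (A j k) (wpb (A j 1) (A j 0) (act j 0 id sigma0) (act j 0 id tau0) k)"

end

theory Submission
  imports Defs
begin

text \<open>
  An element of \<open>NB(j,k)\<close> is a column of \<open>k+1\<close> "pseudo-paths" of length \<open>j\<close>
  (1-cells \<open>f\<^sup>z\<^sub>u\<^sub>v\<close> with invertible comparisons \<open>\<iota>\<^sup>z\<^sub>u\<^sub>v\<^sub>w\<close> satisfying (A2)), linked by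
  2-cells \<open>\<alpha>\<^sup>z\<^sub>u\<^sub>v\<close> satisfying (A1).
  Condition (ii) is then pure bookkeeping: all data of \<open>NB(j,k)\<close> live on single levels or
  on pairs of consecutive levels, so a compatible column of faces glues uniquely
  (\<open>vertical_column\<close>).
  Condition (i) needs coherence.  In simplicial degree 0, a chain of composable 1-cells is
  completed to a pseudo-path by iterated composites and associators; the cocycle condition
  (A2) follows from the pentagon (locale \<open>chain\<close>).  In degree 1, axiom (A1) forces the
  2-cell on \<open>(u, v+1)\<close> to be determined recursively by the elementary 2-cells on
  \<open>(i, i+1)\<close>; this recursion (\<open>path_ext\<close>) both proves uniqueness and, by an induction
  using the cocycle conditions, existence (locale \<open>path_transformation\<close>).
\<close>

definition inv2 :: "('o, 'a, 'c, 'm) bicat_scheme \<Rightarrow> 'c \<Rightarrow> 'c" where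
  "inv2 B \<alpha> = (SOME \<beta>. \<beta> \<in> Cell B \<and> dom2 B \<beta> = cod2 B \<alpha> \<and> cod2 B \<beta> = dom2 B \<alpha> \<and>
        vcomp B \<beta> \<alpha> = id2 B (dom2 B \<alpha>) \<and> vcomp B \<alpha> \<beta> = id2 B (cod2 B \<alpha>))"

context bicategory
begin

abbreviation vc (infixr "\<cdot>" 55) where "\<beta> \<cdot> \<alpha> \<equiv> vcomp B \<beta> \<alpha>"
abbreviation hc (infixr "\<star>" 65) where "\<beta> \<star> \<alpha> \<equiv> hcomp B \<beta> \<alpha>"
abbreviation cc (infixr "\<odot>" 70) where "g \<odot> f \<equiv> comp1 B g f"

text \<open>The axioms of a bicategory, split into rewrite rules for the simplifier.  Vertical
  composition is normalised to right-nested form.\<close>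

lemma src_obj[simp]: "f \<in> Arr B \<Longrightarrow> src1 B f \<in> Obj B"
  and trg_obj[simp]: "f \<in> Arr B \<Longrightarrow> trg1 B f \<in> Obj B"
  using arr_ends by auto

lemma id1_arr[simp]: "a \<in> Obj B \<Longrightarrow> id1 B a \<in> Arr B"
  and id1_src[simp]: "a \<in> Obj B \<Longrightarrow> src1 B (id1 B a) = a"
  and id1_trg[simp]: "a \<in> Obj B \<Longrightarrow> trg1 B (id1 B a) = a"
  using id1_type by auto

lemma comp1_arr[simp]: "\<lbrakk>f \<in> Arr B; g \<in> Arr B; trg1 B f = src1 B g\<rbrakk> \<Longrightarrow> g \<odot> f \<in> Arr B"
  and comp1_src[simp]: "\<lbrakk>f \<in> Arr B; g \<in> Arr B; trg1 B f = src1 B g\<rbrakk> \<Longrightarrow> src1 B (g \<odot> f) = src1 B f"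
  and comp1_trg[simp]: "\<lbrakk>f \<in> Arr B; g \<in> Arr B; trg1 B f = src1 B g\<rbrakk> \<Longrightarrow> trg1 B (g \<odot> f) = trg1 B g"
  using comp1_type by auto

lemma dom_arr[simp]: "\<alpha> \<in> Cell B \<Longrightarrow> dom2 B \<alpha> \<in> Arr B"
  and cod_arr[simp]: "\<alpha> \<in> Cell B \<Longrightarrow> cod2 B \<alpha> \<in> Arr B"
  and src_cod[simp]: "\<alpha> \<in> Cell B \<Longrightarrow> src1 B (cod2 B \<alpha>) = src1 B (dom2 B \<alpha>)"
  and trg_cod[simp]: "\<alpha> \<in> Cell B \<Longrightarrow> trg1 B (cod2 B \<alpha>) = trg1 B (dom2 B \<alpha>)"
  using cell_type by auto

lemma id2_cell[simp]: "f \<in> Arr B \<Longrightarrow> id2 B f \<in> Cell B"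
  and id2_dom[simp]: "f \<in> Arr B \<Longrightarrow> dom2 B (id2 B f) = f"
  and id2_cod[simp]: "f \<in> Arr B \<Longrightarrow> cod2 B (id2 B f) = f"
  using id2_type by auto

lemma vcomp_cell[simp]: "\<lbrakk>\<alpha> \<in> Cell B; \<beta> \<in> Cell B; cod2 B \<alpha> = dom2 B \<beta>\<rbrakk> \<Longrightarrow> \<beta> \<cdot> \<alpha> \<in> Cell B"
  and vcomp_dom[simp]: "\<lbrakk>\<alpha> \<in> Cell B; \<beta> \<in> Cell B; cod2 B \<alpha> = dom2 B \<beta>\<rbrakk> \<Longrightarrow> dom2 B (\<beta> \<cdot> \<alpha>) = dom2 B \<alpha>"
  and vcomp_cod[simp]: "\<lbrakk>\<alpha> \<in> Cell B; \<beta> \<in> Cell B; cod2 B \<alpha> = dom2 B \<beta>\<rbrakk> \<Longrightarrow> cod2 B (\<beta> \<cdot> \<alpha>) = cod2 B \<beta>"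
  using vcomp_type by auto

lemma hcomp_cell[simp]:
    "\<lbrakk>\<alpha> \<in> Cell B; \<beta> \<in> Cell B; trg1 B (dom2 B \<alpha>) = src1 B (dom2 B \<beta>)\<rbrakk> \<Longrightarrow> \<beta> \<star> \<alpha> \<in> Cell B"
  and hcomp_dom[simp]: "\<lbrakk>\<alpha> \<in> Cell B; \<beta> \<in> Cell B; trg1 B (dom2 B \<alpha>) = src1 B (dom2 B \<beta>)\<rbrakk> \<Longrightarrow>
    dom2 B (\<beta> \<star> \<alpha>) = dom2 B \<beta> \<odot> dom2 B \<alpha>"
  and hcomp_cod[simp]: "\<lbrakk>\<alpha> \<in> Cell B; \<beta> \<in> Cell B; trg1 B (dom2 B \<alpha>) = src1 B (dom2 B \<beta>)\<rbrakk> \<Longrightarrow>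
    cod2 B (\<beta> \<star> \<alpha>) = cod2 B \<beta> \<odot> cod2 B \<alpha>"
  using hcomp_type by auto

lemma assoc_iso[simp]:
    "\<lbrakk>f \<in> Arr B; g \<in> Arr B; h \<in> Arr B; trg1 B f = src1 B g; trg1 B g = src1 B h\<rbrakk> \<Longrightarrow> iso2 B (bassoc B h g f)"
  and assoc_dom[simp]: "\<lbrakk>f \<in> Arr B; g \<in> Arr B; h \<in> Arr B; trg1 B f = src1 B g; trg1 B g = src1 B h\<rbrakk> \<Longrightarrow>
    dom2 B (bassoc B h g f) = (h \<odot> g) \<odot> f"
  and assoc_cod[simp]: "\<lbrakk>f \<in> Arr B; g \<in> Arr B; h \<in> Arr B; trg1 B f = src1 B g; trg1 B g = src1 B h\<rbrakk> \<Longrightarrow>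
    cod2 B (bassoc B h g f) = h \<odot> (g \<odot> f)"
  using assoc_type by auto

lemma iso2_cell[simp]: "iso2 B \<alpha> \<Longrightarrow> \<alpha> \<in> Cell B"
  unfolding iso2_def by blast

lemma vcomp_idl[simp]: "\<lbrakk>\<alpha> \<in> Cell B; f = cod2 B \<alpha>\<rbrakk> \<Longrightarrow> id2 B f \<cdot> \<alpha> = \<alpha>"
  and vcomp_idr[simp]: "\<lbrakk>\<alpha> \<in> Cell B; f = dom2 B \<alpha>\<rbrakk> \<Longrightarrow> \<alpha> \<cdot> id2 B f = \<alpha>"
  using vcomp_id_left vcomp_id_right by auto

lemma vassoc[simp]: "\<lbrakk>\<alpha> \<in> Cell B; \<beta> \<in> Cell B; \<gamma> \<in> Cell B; cod2 B \<alpha> = dom2 B \<beta>; cod2 B \<beta> = dom2 B \<gamma>\<rbrakk> \<Longrightarrow>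
    (\<gamma> \<cdot> \<beta>) \<cdot> \<alpha> = \<gamma> \<cdot> (\<beta> \<cdot> \<alpha>)"
  using vcomp_assoc by auto

lemma hcomp_id2[simp]: "\<lbrakk>f \<in> Arr B; g \<in> Arr B; trg1 B f = src1 B g\<rbrakk> \<Longrightarrow> id2 B g \<star> id2 B f = id2 B (g \<odot> f)"
  using hcomp_id by auto

lemma interchange':
  "\<lbrakk>\<alpha> \<in> Cell B; \<alpha>' \<in> Cell B; \<beta> \<in> Cell B; \<beta>' \<in> Cell B; cod2 B \<alpha> = dom2 B \<alpha>'; cod2 B \<beta> = dom2 B \<beta>';
    trg1 B (dom2 B \<alpha>) = src1 B (dom2 B \<beta>)\<rbrakk> \<Longrightarrow> (\<beta>' \<star> \<alpha>') \<cdot> (\<beta> \<star> \<alpha>) = (\<beta>' \<cdot> \<beta>) \<star> (\<alpha>' \<cdot> \<alpha>)"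
  using interchange by auto

lemma inv2_props:
  assumes "iso2 B \<alpha>"
  shows "inv2 B \<alpha> \<in> Cell B \<and> dom2 B (inv2 B \<alpha>) = cod2 B \<alpha> \<and> cod2 B (inv2 B \<alpha>) = dom2 B \<alpha> \<and>
        inv2 B \<alpha> \<cdot> \<alpha> = id2 B (dom2 B \<alpha>) \<and> \<alpha> \<cdot> inv2 B \<alpha> = id2 B (cod2 B \<alpha>)"
proof -
  from assms obtain \<beta> where "\<beta> \<in> Cell B \<and> dom2 B \<beta> = cod2 B \<alpha> \<and> cod2 B \<beta> = dom2 B \<alpha> \<and>
      \<beta> \<cdot> \<alpha> = id2 B (dom2 B \<alpha>) \<and> \<alpha> \<cdot> \<beta> = id2 B (cod2 B \<alpha>)"
    unfolding iso2_def by blast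
  then show ?thesis unfolding inv2_def by (rule someI)
qed

lemma inv2_cell[simp]: "iso2 B \<alpha> \<Longrightarrow> inv2 B \<alpha> \<in> Cell B"
  and inv2_dom[simp]: "iso2 B \<alpha> \<Longrightarrow> dom2 B (inv2 B \<alpha>) = cod2 B \<alpha>"
  and inv2_cod[simp]: "iso2 B \<alpha> \<Longrightarrow> cod2 B (inv2 B \<alpha>) = dom2 B \<alpha>"
  and inv2_left[simp]: "iso2 B \<alpha> \<Longrightarrow> inv2 B \<alpha> \<cdot> \<alpha> = id2 B (dom2 B \<alpha>)"
  and inv2_right[simp]: "iso2 B \<alpha> \<Longrightarrow> \<alpha> \<cdot> inv2 B \<alpha> = id2 B (cod2 B \<alpha>)"
  using inv2_props by blast+

lemma inv2_left'[simp]: "\<lbrakk>iso2 B \<alpha>; \<gamma> \<in> Cell B; cod2 B \<gamma> = dom2 B \<alpha>\<rbrakk> \<Longrightarrow> inv2 B \<alpha> \<cdot> (\<alpha> \<cdot> \<gamma>) = \<gamma>"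
  and inv2_right'[simp]: "\<lbrakk>iso2 B \<alpha>; \<gamma> \<in> Cell B; cod2 B \<gamma> = cod2 B \<alpha>\<rbrakk> \<Longrightarrow> \<alpha> \<cdot> (inv2 B \<alpha> \<cdot> \<gamma>) = \<gamma>"
  by (simp_all del: vassoc add: vassoc[symmetric])

lemma id2_iso[simp]: "f \<in> Arr B \<Longrightarrow> iso2 B (id2 B f)"
  unfolding iso2_def by (intro conjI bexI[of _ "id2 B f"]) auto

lemma vcomp_iso[simp]:
  assumes "iso2 B \<alpha>" "iso2 B \<beta>" "cod2 B \<alpha> = dom2 B \<beta>"
  shows "iso2 B (\<beta> \<cdot> \<alpha>)"
  unfolding iso2_def
proof (intro conjI bexI[of _ "inv2 B \<alpha> \<cdot> inv2 B \<beta>"])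
  have "(inv2 B \<alpha> \<cdot> inv2 B \<beta>) \<cdot> (\<beta> \<cdot> \<alpha>) = inv2 B \<alpha> \<cdot> (inv2 B \<beta> \<cdot> (\<beta> \<cdot> \<alpha>))"
    using assms by simp
  then show "(inv2 B \<alpha> \<cdot> inv2 B \<beta>) \<cdot> (\<beta> \<cdot> \<alpha>) = id2 B (dom2 B (\<beta> \<cdot> \<alpha>))" using assms by simp
  have "(\<beta> \<cdot> \<alpha>) \<cdot> (inv2 B \<alpha> \<cdot> inv2 B \<beta>) = \<beta> \<cdot> (\<alpha> \<cdot> (inv2 B \<alpha> \<cdot> inv2 B \<beta>))"
    using assms by simp
  then show "(\<beta> \<cdot> \<alpha>) \<cdot> (inv2 B \<alpha> \<cdot> inv2 B \<beta>) = id2 B (cod2 B (\<beta> \<cdot> \<alpha>))" using assms by simp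
qed (use assms in simp_all)

lemma hcomp_iso[simp]:
  assumes "iso2 B \<alpha>" "iso2 B \<beta>" "trg1 B (dom2 B \<alpha>) = src1 B (dom2 B \<beta>)"
  shows "iso2 B (\<beta> \<star> \<alpha>)"
  unfolding iso2_def
  by (intro conjI bexI[of _ "inv2 B \<beta> \<star> inv2 B \<alpha>"]) (use assms in \<open>simp_all add: interchange'\<close>)

lemma iso_cancel_right:
  assumes "iso2 B \<iota>" "X \<in> Cell B" "Y \<in> Cell B" "dom2 B X = cod2 B \<iota>" "dom2 B Y = cod2 B \<iota>"
    and "X \<cdot> \<iota> = Y \<cdot> \<iota>"
  shows "X = Y"
proof -
  have "X = (X \<cdot> \<iota>) \<cdot> inv2 B \<iota>" using assms(1,2,4) by simp
  also have "\<dots> = (Y \<cdot> \<iota>) \<cdot> inv2 B \<iota>" using assms(6) by simp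
  also have "\<dots> = Y" using assms(1,3,5) by simp
  finally show ?thesis .
qed

lemma iso_solve_right:
  assumes "iso2 B \<iota>" "X \<in> Cell B" "dom2 B X = cod2 B \<iota>" and "X \<cdot> \<iota> = Y"
  shows "X = Y \<cdot> inv2 B \<iota>"
proof -
  have "Y \<cdot> inv2 B \<iota> = X \<cdot> (\<iota> \<cdot> inv2 B \<iota>)"
    unfolding assms(4)[symmetric] using assms(1-3) by (simp del: inv2_right)
  then show ?thesis using assms(1-3) by simp
qed

end

section \<open>Elements of the nerve\<close>

fun nobj :: "('o, 'a, 'c) ncell \<Rightarrow> nat \<Rightarrow> 'o" where "nobj (NCell a f al io) = a"
fun narr :: "('o, 'a, 'c) ncell \<Rightarrow> nat \<Rightarrow> nat \<Rightarrow> nat \<Rightarrow> 'a" where "narr (NCell a f al io) = f"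
fun n2cell :: "('o, 'a, 'c) ncell \<Rightarrow> nat \<Rightarrow> nat \<Rightarrow> nat \<Rightarrow> 'c" where "n2cell (NCell a f al io) = al"
fun ncomp :: "('o, 'a, 'c) ncell \<Rightarrow> nat \<Rightarrow> nat \<Rightarrow> nat \<Rightarrow> nat \<Rightarrow> 'c" where "ncomp (NCell a f al io) = io"

lemma ncell_eqI: "\<lbrakk>nobj x = nobj y; narr x = narr y; n2cell x = n2cell y; ncomp x = ncomp y\<rbrakk> \<Longrightarrow> x = y"
  by (cases x; cases y) simp

text \<open>\<open>trim j k x\<close> keeps the entries of \<open>x\<close> inside the index ranges of shape \<open>(j,k)\<close> and
  sets all others to \<open>undefined\<close>; elements of \<open>NB B j k\<close> are exactly the trimmed quadruples
  satisfying the laws of the paper.\<close>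

definition trim :: "nat \<Rightarrow> nat \<Rightarrow> ('o, 'a, 'c) ncell \<Rightarrow> ('o, 'a, 'c) ncell" where
  "trim j k x = NCell (\<lambda>u. if u \<le> j then nobj x u else undefined)
     (\<lambda>z u v. if u < v \<and> v \<le> j \<and> z \<le> k then narr x z u v else undefined)
     (\<lambda>z u v. if u < v \<and> v \<le> j \<and> 1 \<le> z \<and> z \<le> k then n2cell x z u v else undefined)
     (\<lambda>z u v w. if u < v \<and> v < w \<and> w \<le> j \<and> z \<le> k then ncomp x z u v w else undefined)"

lemma trim_simps[simp]:
  "nobj (trim j k x) u = (if u \<le> j then nobj x u else undefined)"
  "narr (trim j k x) z u v = (if u < v \<and> v \<le> j \<and> z \<le> k then narr x z u v else undefined)"
  "n2cell (trim j k x) z u v = (if u < v \<and> v \<le> j \<and> 1 \<le> z \<and> z \<le> k then n2cell x z u v else undefined)"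
  "ncomp (trim j k x) z u v w = (if u < v \<and> v < w \<and> w \<le> j \<and> z \<le> k then ncomp x z u v w else undefined)"
  unfolding trim_def by simp_all

lemma trim_trim[simp]: "trim j k (trim j k x) = trim j k x"
  by (rule ncell_eqI) (auto simp: fun_eq_iff)

lemma trim_eq_iff:
  "trim j k x = trim j k y \<longleftrightarrow>
     (\<forall>u\<le>j. nobj x u = nobj y u) \<and>
     (\<forall>z u v. u < v \<and> v \<le> j \<and> z \<le> k \<longrightarrow> narr x z u v = narr y z u v) \<and>
     (\<forall>z u v. u < v \<and> v \<le> j \<and> 1 \<le> z \<and> z \<le> k \<longrightarrow> n2cell x z u v = n2cell y z u v) \<and>
     (\<forall>z u v w. u < v \<and> v < w \<and> w \<le> j \<and> z \<le> k \<longrightarrow> ncomp x z u v w = ncomp y z u v w)"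
  (is "?L \<longleftrightarrow> ?R")
proof
  assume ?L
  then have o: "nobj (trim j k x) u = nobj (trim j k y) u"
    and a: "narr (trim j k x) z u v = narr (trim j k y) z u v"
    and c: "n2cell (trim j k x) z u v = n2cell (trim j k y) z u v"
    and i: "ncomp (trim j k x) z u v w = ncomp (trim j k y) z u v w" for z u v w
    by simp_all
  show ?R
  proof (intro conjI allI impI)
    show "nobj x u = nobj y u" if "u \<le> j" for u using that o[of u] by simp
    show "narr x z u v = narr y z u v" if "u < v \<and> v \<le> j \<and> z \<le> k" for z u v
      using that a[of z u v] by simp
    show "n2cell x z u v = n2cell y z u v" if "u < v \<and> v \<le> j \<and> 1 \<le> z \<and> z \<le> k" for z u v
      using that c[of z u v] by simp
    show "ncomp x z u v w = ncomp y z u v w" if "u < v \<and> v < w \<and> w \<le> j \<and> z \<le> k" for z u v w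
      using that i[of z u v w] by simp
  qed
next
  assume ?R
  then show ?L by (intro ncell_eqI) (auto simp: fun_eq_iff)
qed

definition nerve_laws :: "('o, 'a, 'c, 'm) bicat_scheme \<Rightarrow> nat \<Rightarrow> nat \<Rightarrow> ('o, 'a, 'c) ncell \<Rightarrow> bool" where
  "nerve_laws B j k x \<longleftrightarrow>
    (\<forall>u\<le>j. nobj x u \<in> Obj B) \<and>
    (\<forall>z u v. u < v \<and> v \<le> j \<and> z \<le> k \<longrightarrow>
       narr x z u v \<in> Arr B \<and> src1 B (narr x z u v) = nobj x u \<and> trg1 B (narr x z u v) = nobj x v) \<and>
    (\<forall>z u v. u < v \<and> v \<le> j \<and> 1 \<le> z \<and> z \<le> k \<longrightarrow>
       n2cell x z u v \<in> Cell B \<and> dom2 B (n2cell x z u v) = narr x (z - 1) u v \<and>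
       cod2 B (n2cell x z u v) = narr x z u v) \<and>
    (\<forall>z u v w. u < v \<and> v < w \<and> w \<le> j \<and> z \<le> k \<longrightarrow>
       iso2 B (ncomp x z u v w) \<and> dom2 B (ncomp x z u v w) = comp1 B (narr x z v w) (narr x z u v) \<and>
       cod2 B (ncomp x z u v w) = narr x z u w) \<and>
    (\<forall>z u v w. u < v \<and> v < w \<and> w \<le> j \<and> 1 \<le> z \<and> z \<le> k \<longrightarrow>
       vcomp B (ncomp x z u v w) (hcomp B (n2cell x z v w) (n2cell x z u v)) =
       vcomp B (n2cell x z u w) (ncomp x (z - 1) u v w)) \<and>
    (\<forall>z u v w y. u < v \<and> v < w \<and> w < y \<and> y \<le> j \<and> z \<le> k \<longrightarrow>
       vcomp B (ncomp x z u w y) (vcomp B (hcomp B (id2 B (narr x z w y)) (ncomp x z u v w))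
          (bassoc B (narr x z w y) (narr x z v w) (narr x z u v))) =
       vcomp B (ncomp x z u v y) (hcomp B (ncomp x z v w y) (id2 B (narr x z u v))))"

lemma nerve_lawsI:
  assumes "\<And>u. u \<le> j \<Longrightarrow> nobj x u \<in> Obj B"
    and "\<And>z u v. \<lbrakk>u < v; v \<le> j; z \<le> k\<rbrakk> \<Longrightarrow>
       narr x z u v \<in> Arr B \<and> src1 B (narr x z u v) = nobj x u \<and> trg1 B (narr x z u v) = nobj x v"
    and "\<And>z u v. \<lbrakk>u < v; v \<le> j; 1 \<le> z; z \<le> k\<rbrakk> \<Longrightarrow>
       n2cell x z u v \<in> Cell B \<and> dom2 B (n2cell x z u v) = narr x (z - 1) u v \<and>
       cod2 B (n2cell x z u v) = narr x z u v"
    and "\<And>z u v w. \<lbrakk>u < v; v < w; w \<le> j; z \<le> k\<rbrakk> \<Longrightarrow>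
       iso2 B (ncomp x z u v w) \<and> dom2 B (ncomp x z u v w) = comp1 B (narr x z v w) (narr x z u v) \<and>
       cod2 B (ncomp x z u v w) = narr x z u w"
    and "\<And>z u v w. \<lbrakk>u < v; v < w; w \<le> j; 1 \<le> z; z \<le> k\<rbrakk> \<Longrightarrow>
       vcomp B (ncomp x z u v w) (hcomp B (n2cell x z v w) (n2cell x z u v)) =
       vcomp B (n2cell x z u w) (ncomp x (z - 1) u v w)"
    and "\<And>z u v w y. \<lbrakk>u < v; v < w; w < y; y \<le> j; z \<le> k\<rbrakk> \<Longrightarrow>
       vcomp B (ncomp x z u w y) (vcomp B (hcomp B (id2 B (narr x z w y)) (ncomp x z u v w))
          (bassoc B (narr x z w y) (narr x z v w) (narr x z u v))) =
       vcomp B (ncomp x z u v y) (hcomp B (ncomp x z v w y) (id2 B (narr x z u v)))"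
  shows "nerve_laws B j k x"
  unfolding nerve_laws_def using assms by simp

lemma nerve_lawsD:
  assumes "nerve_laws B j k x"
  shows "u \<le> j \<Longrightarrow> nobj x u \<in> Obj B"
    and "\<lbrakk>u < v; v \<le> j; z \<le> k\<rbrakk> \<Longrightarrow>
       narr x z u v \<in> Arr B \<and> src1 B (narr x z u v) = nobj x u \<and> trg1 B (narr x z u v) = nobj x v"
    and "\<lbrakk>u < v; v \<le> j; 1 \<le> z; z \<le> k\<rbrakk> \<Longrightarrow>
       n2cell x z u v \<in> Cell B \<and> dom2 B (n2cell x z u v) = narr x (z - 1) u v \<and>
       cod2 B (n2cell x z u v) = narr x z u v"
    and "\<lbrakk>u < v; v < w; w \<le> j; z \<le> k\<rbrakk> \<Longrightarrow>
       iso2 B (ncomp x z u v w) \<and> dom2 B (ncomp x z u v w) = comp1 B (narr x z v w) (narr x z u v) \<and>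
       cod2 B (ncomp x z u v w) = narr x z u w"
    and "\<lbrakk>u < v; v < w; w \<le> j; 1 \<le> z; z \<le> k\<rbrakk> \<Longrightarrow>
       vcomp B (ncomp x z u v w) (hcomp B (n2cell x z v w) (n2cell x z u v)) =
       vcomp B (n2cell x z u w) (ncomp x (z - 1) u v w)"
    and "\<lbrakk>u < v; v < w; w < y; y \<le> j; z \<le> k\<rbrakk> \<Longrightarrow>
       vcomp B (ncomp x z u w y) (vcomp B (hcomp B (id2 B (narr x z w y)) (ncomp x z u v w))
          (bassoc B (narr x z w y) (narr x z v w) (narr x z u v))) =
       vcomp B (ncomp x z u v y) (hcomp B (ncomp x z v w y) (id2 B (narr x z u v)))"
  using assms unfolding nerve_laws_def by simp_all

lemma nerve_data_iff:
  "nerve_data B j k a f al io \<longleftrightarrow>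
     nerve_laws B j k (NCell a f al io) \<and> trim j k (NCell a f al io) = NCell a f al io"
proof -
  have "trim j k (NCell a f al io) = NCell a f al io \<longleftrightarrow>
     (\<forall>u. \<not> u \<le> j \<longrightarrow> a u = undefined) \<and>
     (\<forall>z u v. \<not> (u < v \<and> v \<le> j \<and> z \<le> k) \<longrightarrow> f z u v = undefined) \<and>
     (\<forall>z u v. \<not> (u < v \<and> v \<le> j \<and> 1 \<le> z \<and> z \<le> k) \<longrightarrow> al z u v = undefined) \<and>
     (\<forall>z u v w. \<not> (u < v \<and> v < w \<and> w \<le> j \<and> z \<le> k) \<longrightarrow> io z u v w = undefined)"
    unfolding trim_def by (auto simp: fun_eq_iff)
  then show ?thesis
    unfolding nerve_data_def nerve_laws_def by (simp add: all_conj_distrib) argo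
qed

lemma NB_iff: "x \<in> NB B j k \<longleftrightarrow> nerve_laws B j k x \<and> trim j k x = x"
  by (cases x) (simp add: NB_def nerve_data_iff)

lemma NB_laws: "x \<in> NB B j k \<Longrightarrow> nerve_laws B j k x"
  and NB_trim: "x \<in> NB B j k \<Longrightarrow> trim j k x = x"
  by (simp_all add: NB_iff)

lemma laws_trim[simp]: "nerve_laws B j k (trim j k x) \<longleftrightarrow> nerve_laws B j k x"
  unfolding nerve_laws_def by auto

lemma trim_in_NB: "nerve_laws B j k x \<Longrightarrow> trim j k x \<in> NB B j k"
  by (simp add: NB_iff)

lemma trim_trim_le[simp]: "m \<le> k \<Longrightarrow> trim j m (trim j k x) = trim j m x"
  by (simp add: trim_eq_iff)

lemma NB_eq_iff: "\<lbrakk>x \<in> NB B j k; y \<in> NB B j k\<rbrakk> \<Longrightarrow> x = y \<longleftrightarrow> trim j k x = trim j k y"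
  by (simp add: NB_trim)

definition pt :: "'o \<Rightarrow> ('o, 'a, 'c) ncell" where
  "pt a0 = NCell (\<lambda>u. if u = 0 then a0 else undefined)
     (\<lambda>_ _ _. undefined) (\<lambda>_ _ _. undefined) (\<lambda>_ _ _ _. undefined)"

lemma nobj_pt[simp]: "nobj (pt a0) 0 = a0"
  by (simp add: pt_def)

lemma pt_inj[simp]: "pt a0 = pt b0 \<longleftrightarrow> a0 = b0"
  by (metis nobj_pt)

lemma NB_0:
  fixes B :: "('o, 'a, 'c, 'm) bicat_scheme"
  shows "NB B 0 k = pt ` Obj B"
proof -
  have trim_0: "trim 0 k x = pt (nobj x 0)" for x :: "('o, 'a, 'c) ncell"
    by (rule ncell_eqI) (auto simp: pt_def fun_eq_iff)
  have laws_0: "nerve_laws B 0 k x \<longleftrightarrow> nobj x 0 \<in> Obj B" for x :: "('o, 'a, 'c) ncell"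
    unfolding nerve_laws_def by auto
  show ?thesis
  proof (intro equalityI subsetI)
    fix x :: "('o, 'a, 'c) ncell" assume "x \<in> NB B 0 k"
    then have "x = pt (nobj x 0)" "nobj x 0 \<in> Obj B"
      unfolding NB_iff trim_0 laws_0 by auto
    then show "x \<in> pt ` Obj B" by blast
  next
    fix x :: "('o, 'a, 'c) ncell" assume "x \<in> pt ` Obj B"
    then obtain a0 where "a0 \<in> Obj B" "x = pt a0" by blast
    then show "x \<in> NB B 0 k" unfolding NB_iff trim_0 laws_0 by simp
  qed
qed

text \<open>Restricting an element of the nerve along an interval inclusion \<open>[m] \<rightarrow> [k]\<close>,
  \<open>z \<mapsto> c + z\<close>, in the vertical direction, or \<open>[l] \<rightarrow> [j]\<close>, \<open>u \<mapsto> c + u\<close>, in the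
  horizontal direction, amounts to shifting indices (and trimming).\<close>

definition vshift :: "nat \<Rightarrow> ('o, 'a, 'c) ncell \<Rightarrow> ('o, 'a, 'c) ncell" where
  "vshift c x = NCell (nobj x) (\<lambda>z. narr x (c + z)) (\<lambda>z. n2cell x (c + z)) (\<lambda>z. ncomp x (c + z))"

definition hshift :: "nat \<Rightarrow> ('o, 'a, 'c) ncell \<Rightarrow> ('o, 'a, 'c) ncell" where
  "hshift c x = NCell (\<lambda>u. nobj x (c + u)) (\<lambda>z u v. narr x z (c + u) (c + v))
     (\<lambda>z u v. n2cell x z (c + u) (c + v)) (\<lambda>z u v w. ncomp x z (c + u) (c + v) (c + w))"

lemma vshift_simps[simp]:
  "nobj (vshift c x) = nobj x" "narr (vshift c x) z = narr x (c + z)"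
  "n2cell (vshift c x) z = n2cell x (c + z)" "ncomp (vshift c x) z = ncomp x (c + z)"
  by (simp_all add: vshift_def)

lemma hshift_simps[simp]:
  "nobj (hshift c x) u = nobj x (c + u)" "narr (hshift c x) z u v = narr x z (c + u) (c + v)"
  "n2cell (hshift c x) z u v = n2cell x z (c + u) (c + v)"
  "ncomp (hshift c x) z u v w = ncomp x z (c + u) (c + v) (c + w)"
  by (simp_all add: hshift_def)

lemma vshift_0[simp]: "vshift 0 x = x"
  by (rule ncell_eqI) (simp_all add: fun_eq_iff)

lemma vseg_single[simp]: "0 < n \<Longrightarrow> vseg B al fl (n - Suc 0) n = al n"
  by (cases n) simp_all

lemma nerve_map_vertical:
  assumes q: "\<forall>z\<le>m. q z = c + z"
  shows "nerve_map B j m id q x = trim j m (vshift c x)"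
proof (cases x)
  case (NCell a f al io)
  have "q (z - 1) = c + z - Suc 0" if "1 \<le> z" "z \<le> m" for z
    using q that by simp
  then have "nerve_map B j m id q x = NCell (\<lambda>u. if u \<le> j then a u else undefined)
       (\<lambda>z u v. if u < v \<and> v \<le> j \<and> z \<le> m then f (c + z) u v else undefined)
       (\<lambda>z u v. if u < v \<and> v \<le> j \<and> 1 \<le> z \<and> z \<le> m then al (c + z) u v else undefined)
       (\<lambda>z u v w. if u < v \<and> v < w \<and> w \<le> j \<and> z \<le> m then io (c + z) u v w else undefined)"
    unfolding NCell nerve_map_def Let_def ncell.case using q by (auto simp: fun_eq_iff)
  also have "\<dots> = trim j m (vshift c x)"
    unfolding NCell trim_def by (simp cong: if_cong)
  finally show ?thesis .
qed

lemma nerve_map_horizontal: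
  assumes p: "\<forall>u\<le>l. p u = c + u"
  shows "nerve_map B l n p id x = trim l n (hshift c x)"
proof (cases x)
  case (NCell a f al io)
  have "nerve_map B l n p id x = NCell (\<lambda>u. if u \<le> l then a (c + u) else undefined)
       (\<lambda>z u v. if u < v \<and> v \<le> l \<and> z \<le> n then f z (c + u) (c + v) else undefined)
       (\<lambda>z u v. if u < v \<and> v \<le> l \<and> 1 \<le> z \<and> z \<le> n then al z (c + u) (c + v) else undefined)
       (\<lambda>z u v w. if u < v \<and> v < w \<and> w \<le> l \<and> z \<le> n then io z (c + u) (c + v) (c + w) else undefined)"
    unfolding NCell nerve_map_def Let_def ncell.case using p by (auto simp: fun_eq_iff)
  also have "\<dots> = trim l n (hshift c x)"
    unfolding NCell trim_def by (simp cong: if_cong)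
  finally show ?thesis .
qed

lemma nerve_map_point: "nerve_map B 0 0 p q x = pt (nobj x (p 0))"
  by (cases x) (auto simp: nerve_map_def pt_def fun_eq_iff)

lemma laws_vshift:
  assumes "nerve_laws B j k x" "c + m \<le> k"
  shows "nerve_laws B j m (vshift c x)"
proof -
  have "c + z - 1 = c + (z - 1)" if "1 \<le> z" for z using that by simp
  then show ?thesis using assms unfolding nerve_laws_def by auto
qed

lemma laws_hshift:
  assumes "nerve_laws B j n x" "c + l \<le> j"
  shows "nerve_laws B l n (hshift c x)"
  using assms unfolding nerve_laws_def by auto

lemma vface_in_NB: "\<lbrakk>x \<in> NB B j k; c + m \<le> k\<rbrakk> \<Longrightarrow> trim j m (vshift c x) \<in> NB B j m"
  by (rule trim_in_NB, rule laws_vshift[OF NB_laws])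

lemma hface_in_NB: "\<lbrakk>x \<in> NB B j k; c + l \<le> j\<rbrakk> \<Longrightarrow> trim l k (hshift c x) \<in> NB B l k"
  by (rule trim_in_NB, rule laws_hshift[OF NB_laws])

lemma segal_map_2_eq:
  "segal_map_2 (nerve_map B) j k x =
     (map (\<lambda>i. trim j 1 (vshift i x)) [0..<k], map (\<lambda>i. trim j 0 (vshift i x)) [0..<Suc k])"
proof -
  have "nerve_map B j 1 id (iota (Suc i)) x = trim j 1 (vshift i x)" for i
    by (rule nerve_map_vertical) (simp add: iota_def)
  moreover have "nerve_map B j 0 id (\<lambda>_. i) x = trim j 0 (vshift i x)" for i
    by (rule nerve_map_vertical) simp
  ultimately show ?thesis
    unfolding segal_map_2_def by (simp add: map_Suc_upt[symmetric] del: upt_Suc)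
qed

lemma segal_map_1_eq:
  "segal_map_1 (nerve_map B) k n x =
     (map (\<lambda>i. trim 1 n (hshift i x)) [0..<k], map (\<lambda>i. pt (nobj x i)) [0..<Suc k])"
proof -
  have "nerve_map B 1 n (iota (Suc i)) id x = trim 1 n (hshift i x)" for i
    by (rule nerve_map_horizontal) (simp add: iota_def)
  then show ?thesis
    unfolding segal_map_1_def by (simp add: nerve_map_point map_Suc_upt[symmetric] del: upt_Suc)
qed

lemma vertical_faces:
  "nerve_map B j 0 id sigma0 = trim j 0" "nerve_map B j 0 id tau0 = (\<lambda>y. trim j 0 (vshift 1 y))"
proof -
  have "nerve_map B j 0 id sigma0 y = trim j 0 (vshift 0 y)" "nerve_map B j 0 id tau0 y = trim j 0 (vshift 1 y)" for y
    by (rule nerve_map_vertical; simp add: sigma0_def tau0_def)+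
  then show "nerve_map B j 0 id sigma0 = trim j 0" "nerve_map B j 0 id tau0 = (\<lambda>y. trim j 0 (vshift 1 y))"
    by (simp_all add: fun_eq_iff)
qed

lemma horizontal_faces:
  "nerve_map B 0 0 sigma0 q = (\<lambda>y. pt (nobj y 0))" "nerve_map B 0 0 tau0 q = (\<lambda>y. pt (nobj y 1))"
  by (simp_all add: nerve_map_point sigma0_def tau0_def fun_eq_iff)

lemma vshift_vshift[simp]: "vshift c (vshift d x) = vshift (d + c) x"
  by (rule ncell_eqI) (simp_all add: fun_eq_iff add.assoc)

lemma trim_vshift_trim:
  "c + m \<le> k \<Longrightarrow> trim j m (vshift c (trim j k x)) = trim j m (vshift c x)"
  by (simp add: trim_eq_iff)

section \<open>The Segal condition in the vertical direction\<close>

text \<open>An element of \<open>NB(j,k)\<close> is determined by its vertical faces of shape \<open>(j,0)\<close> and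
  \<open>(j,1)\<close>: the 1-cells and comparison cells live at the single levels, and each 2-cell
  \<open>\<alpha>\<^sup>z\<close> lives on the face spanned by the levels \<open>z - 1\<close> and \<open>z\<close>.\<close>

lemma vertical_faces_determine:
  assumes x: "x \<in> NB B j k" and y: "y \<in> NB B j k"
    and levels: "\<And>i. i \<le> k \<Longrightarrow> trim j 0 (vshift i x) = trim j 0 (vshift i y)"
    and steps: "\<And>i. i < k \<Longrightarrow> trim j 1 (vshift i x) = trim j 1 (vshift i y)"
  shows "x = y"
proof -
  have "trim j k x = trim j k y"
    unfolding trim_eq_iff
  proof (intro conjI allI impI)
    show "nobj x u = nobj y u" if "u \<le> j" for u
      using that levels[of 0] by (simp add: trim_eq_iff)
    show "narr x z u v = narr y z u v" if "u < v \<and> v \<le> j \<and> z \<le> k" for z u v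
      using that levels[of z] by (simp add: trim_eq_iff)
    show "ncomp x z u v w = ncomp y z u v w" if "u < v \<and> v < w \<and> w \<le> j \<and> z \<le> k" for z u v w
      using that levels[of z] by (simp add: trim_eq_iff)
    show "n2cell x z u v = n2cell y z u v" if "u < v \<and> v \<le> j \<and> 1 \<le> z \<and> z \<le> k" for z u v
    proof -
      have "z - 1 < k" using that by auto
      then have "n2cell (trim j 1 (vshift (z - 1) x)) 1 u v = n2cell (trim j 1 (vshift (z - 1) y)) 1 u v"
        using steps by simp
      then show ?thesis using that by simp
    qed
  qed
  then show ?thesis using x y by (simp add: NB_eq_iff)
qed

text \<open>Conversely, a compatible column of \<open>k\<close> faces of shape \<open>(j,1)\<close> glues to an element of
  \<open>NB(j,k)\<close>: take the 1-cells and comparison cells of level \<open>z\<close> from the \<open>z\<close>-th point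
  \<open>bs ! z\<close>, and the 2-cells \<open>\<alpha>\<^sup>z\<close> from the \<open>(z-1)\<close>-th face \<open>xs ! (z-1)\<close>.\<close>

definition vglue :: "('o, 'a, 'c) ncell list \<Rightarrow> ('o, 'a, 'c) ncell list \<Rightarrow> ('o, 'a, 'c) ncell" where
  "vglue xs bs = NCell (nobj (bs ! 0)) (\<lambda>z. narr (bs ! z) 0) (\<lambda>z. n2cell (xs ! (z - 1)) 1)
     (\<lambda>z. ncomp (bs ! z) 0)"

lemma vglue_simps[simp]:
  "nobj (vglue xs bs) = nobj (bs ! 0)" "narr (vglue xs bs) z = narr (bs ! z) 0"
  "n2cell (vglue xs bs) z = n2cell (xs ! (z - 1)) 1" "ncomp (vglue xs bs) z = ncomp (bs ! z) 0"
  by (simp_all add: vglue_def)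

locale vertical_column =
  fixes B :: "('o, 'a, 'c, 'm) bicat_scheme" and j k :: nat and xs bs :: "('o, 'a, 'c) ncell list"
  assumes faces: "\<And>i. i < k \<Longrightarrow> xs ! i \<in> NB B j 1"
    and points: "\<And>i. i \<le> k \<Longrightarrow> bs ! i \<in> NB B j 0"
    and source: "\<And>i. i < k \<Longrightarrow> trim j 0 (xs ! i) = bs ! i"
    and target: "\<And>i. i < k \<Longrightarrow> trim j 0 (vshift 1 (xs ! i)) = bs ! Suc i"
begin

lemma face_ends:
  "i < k \<Longrightarrow> trim j 0 (xs ! i) = trim j 0 (bs ! i) \<and> trim j 0 (vshift 1 (xs ! i)) = trim j 0 (bs ! Suc i)"
  using source target NB_trim[OF points, of i] NB_trim[OF points, of "Suc i"] by simp

lemma face_components: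
  assumes "i < k"
  shows "\<And>u. u \<le> j \<Longrightarrow> nobj (xs ! i) u = nobj (bs ! i) u \<and> nobj (xs ! i) u = nobj (bs ! Suc i) u"
    and "\<And>u v. \<lbrakk>u < v; v \<le> j\<rbrakk> \<Longrightarrow>
      narr (xs ! i) 0 u v = narr (bs ! i) 0 u v \<and> narr (xs ! i) 1 u v = narr (bs ! Suc i) 0 u v"
    and "\<And>u v w. \<lbrakk>u < v; v < w; w \<le> j\<rbrakk> \<Longrightarrow>
      ncomp (xs ! i) 0 u v w = ncomp (bs ! i) 0 u v w \<and> ncomp (xs ! i) 1 u v w = ncomp (bs ! Suc i) 0 u v w"
  using face_ends[OF assms] unfolding trim_eq_iff by auto

lemma objects_constant: "\<lbrakk>i \<le> k; u \<le> j\<rbrakk> \<Longrightarrow> nobj (bs ! i) u = nobj (bs ! 0) u"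
proof (induction i)
  case (Suc i)
  then have "nobj (bs ! Suc i) u = nobj (bs ! i) u"
    using face_components(1)[of i u] by (metis Suc_le_lessD)
  then show ?case using Suc by simp
qed simp

lemma face_cell:
  "\<lbrakk>i < k; u < v; v \<le> j\<rbrakk> \<Longrightarrow> n2cell (xs ! i) 1 u v \<in> Cell B \<and>
     dom2 B (n2cell (xs ! i) 1 u v) = narr (bs ! i) 0 u v \<and> cod2 B (n2cell (xs ! i) 1 u v) = narr (bs ! Suc i) 0 u v"
  using nerve_lawsD(3)[OF NB_laws[OF faces], of i u v 1] face_components(2)[of i u v] by simp

lemma face_A1:
  "\<lbrakk>i < k; u < v; v < w; w \<le> j\<rbrakk> \<Longrightarrow>
     vcomp B (ncomp (bs ! Suc i) 0 u v w) (hcomp B (n2cell (xs ! i) 1 v w) (n2cell (xs ! i) 1 u v)) =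
     vcomp B (n2cell (xs ! i) 1 u w) (ncomp (bs ! i) 0 u v w)"
  using nerve_lawsD(5)[OF NB_laws[OF faces], of i u v w 1] face_components(3)[of i u v w] by simp

text \<open>The glued quadruple satisfies the laws: everything but the 2-cells and (A1) is
  inherited from the points, and those from the faces.\<close>

lemma laws_vglue: "nerve_laws B j k (vglue xs bs)"
proof -
  have bs: "nerve_laws B j 0 (bs ! z)" if "z \<le> k" for z
    using NB_laws[OF points[OF that]] .
  have step: "z - 1 < k" "Suc (z - 1) = z" if "1 \<le> z" "z \<le> k" for z
    using that by simp_all
  show ?thesis
  proof (rule nerve_lawsI; unfold vglue_simps)
    fix u assume "u \<le> j"
    then show "nobj (bs ! 0) u \<in> Obj B" using nerve_lawsD(1)[OF bs[of 0]] by simp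
  next
    fix z u v assume "u < v" "v \<le> j" "z \<le> k"
    then show "narr (bs ! z) 0 u v \<in> Arr B \<and> src1 B (narr (bs ! z) 0 u v) = nobj (bs ! 0) u \<and>
      trg1 B (narr (bs ! z) 0 u v) = nobj (bs ! 0) v"
      using nerve_lawsD(2)[OF bs \<open>u < v\<close> \<open>v \<le> j\<close>, of z 0]
        objects_constant[of z u] objects_constant[of z v] by simp
  next
    fix z u v assume "u < v" "v \<le> j" "1 \<le> z" "z \<le> k"
    then show "n2cell (xs ! (z - 1)) 1 u v \<in> Cell B \<and>
      dom2 B (n2cell (xs ! (z - 1)) 1 u v) = narr (bs ! (z - 1)) 0 u v \<and>
      cod2 B (n2cell (xs ! (z - 1)) 1 u v) = narr (bs ! z) 0 u v"
      using face_cell[of "z - 1" u v] step[of z] by simp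
  next
    fix z u v w assume "u < v" "v < w" "w \<le> j" "z \<le> k"
    then show "iso2 B (ncomp (bs ! z) 0 u v w) \<and>
      dom2 B (ncomp (bs ! z) 0 u v w) = comp1 B (narr (bs ! z) 0 v w) (narr (bs ! z) 0 u v) \<and>
      cod2 B (ncomp (bs ! z) 0 u v w) = narr (bs ! z) 0 u w"
      using nerve_lawsD(4)[OF bs \<open>u < v\<close> \<open>v < w\<close> \<open>w \<le> j\<close>, of z 0] by simp
  next
    fix z u v w assume "u < v" "v < w" "w \<le> j" "1 \<le> z" "z \<le> k"
    then show "vcomp B (ncomp (bs ! z) 0 u v w) (hcomp B (n2cell (xs ! (z - 1)) 1 v w) (n2cell (xs ! (z - 1)) 1 u v)) =
      vcomp B (n2cell (xs ! (z - 1)) 1 u w) (ncomp (bs ! (z - 1)) 0 u v w)"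
      using face_A1[of "z - 1" u v w] step[of z] by simp
  next
    fix z u v w y assume "u < v" "v < w" "w < y" "y \<le> j" "z \<le> k"
    then show "vcomp B (ncomp (bs ! z) 0 u w y) (vcomp B (hcomp B (id2 B (narr (bs ! z) 0 w y))
        (ncomp (bs ! z) 0 u v w)) (bassoc B (narr (bs ! z) 0 w y) (narr (bs ! z) 0 v w) (narr (bs ! z) 0 u v))) =
      vcomp B (ncomp (bs ! z) 0 u v y) (hcomp B (ncomp (bs ! z) 0 v w y) (id2 B (narr (bs ! z) 0 u v)))"
      using nerve_lawsD(6)[OF bs \<open>u < v\<close> \<open>v < w\<close> \<open>w < y\<close> \<open>y \<le> j\<close>, of z 0] by simp
  qed
qed

lemma vglue_faces:
  shows "i < k \<Longrightarrow> trim j 1 (vshift i (trim j k (vglue xs bs))) = xs ! i"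
    and "i \<le> k \<Longrightarrow> trim j 0 (vshift i (trim j k (vglue xs bs))) = bs ! i"
proof -
  assume i: "i < k"
  have "trim j 1 (vshift i (vglue xs bs)) = trim j 1 (xs ! i)"
    unfolding trim_eq_iff using face_components[OF i] objects_constant[of i] i
    by (auto simp: le_Suc_eq)
  also have "\<dots> = xs ! i"
    by (rule NB_trim[OF faces[OF i]])
  finally show "trim j 1 (vshift i (trim j k (vglue xs bs))) = xs ! i"
    using i by (simp add: trim_vshift_trim)
next
  assume i: "i \<le> k"
  have "trim j 0 (vshift i (vglue xs bs)) = trim j 0 (bs ! i)"
    unfolding trim_eq_iff using objects_constant[of i] i by auto
  also have "\<dots> = bs ! i"
    by (rule NB_trim[OF points[OF i]])
  finally show "trim j 0 (vshift i (trim j k (vglue xs bs))) = bs ! i"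
    using i by (simp add: trim_vshift_trim)
qed

end

text \<open>Condition (ii): the Segal maps \<open>S\<^sub>j\<^sub>,\<^sub>k\<close> are bijections.  Note that this uses none of
  the bicategory axioms.\<close>

theorem segal_cond_2_nerve: "segal_cond_2 (NB B) (nerve_map B) j k"
proof -
  let ?W = "wpb (NB B j 1) (NB B j 0) (trim j 0) (\<lambda>y. trim j 0 (vshift 1 y)) k"
  have "inj_on (segal_map_2 (nerve_map B) j k) (NB B j k)"
    by (rule inj_onI, rule vertical_faces_determine)
       (auto simp: segal_map_2_eq map_eq_conv simp del: upt_Suc)
  moreover have "segal_map_2 (nerve_map B) j k ` NB B j k \<subseteq> ?W"
    by (auto simp: segal_map_2_eq wpb_def vface_in_NB trim_vshift_trim simp del: upt_Suc)
  moreover have "?W \<subseteq> segal_map_2 (nerve_map B) j k ` NB B j k"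
  proof
    fix w assume "w \<in> ?W"
    obtain xs bs where w: "w = (xs, bs)" by (cases w)
    have len: "length xs = k" "length bs = Suc k"
      and sub: "set xs \<subseteq> NB B j 1" "set bs \<subseteq> NB B j 0"
      and ends: "\<forall>i<k. trim j 0 (xs ! i) = bs ! i \<and> trim j 0 (vshift 1 (xs ! i)) = bs ! Suc i"
      using \<open>w \<in> ?W\<close> unfolding w wpb_def by auto
    interpret vertical_column B j k xs bs
      by unfold_locales (use len sub ends in \<open>auto intro!: subsetD[OF _ nth_mem]\<close>)
    have "trim j k (vglue xs bs) \<in> NB B j k" "segal_map_2 (nerve_map B) j k (trim j k (vglue xs bs)) = w"
      using laws_vglue vglue_faces len
      by (auto simp: w trim_in_NB segal_map_2_eq intro!: nth_equalityI simp del: upt_Suc)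
    then show "w \<in> segal_map_2 (nerve_map B) j k ` NB B j k" by blast
  qed
  ultimately show ?thesis
    unfolding segal_cond_2_def bij_betw_def vertical_faces by blast
qed

section \<open>Paths in a bicategory\<close>

context bicategory
begin

lemma vcomp_eq_postcompose:
  assumes "A \<cdot> X = P \<cdot> Q" "A \<in> Cell B" "X \<in> Cell B" "P \<in> Cell B" "Q \<in> Cell B"
    "cod2 B X = dom2 B A" "cod2 B Q = dom2 B P" "dom2 B Q = dom2 B X" "Z \<in> Cell B" "cod2 B Z = dom2 B X"
  shows "A \<cdot> (X \<cdot> Z) = P \<cdot> (Q \<cdot> Z)"
proof -
  have "A \<cdot> (X \<cdot> Z) = (A \<cdot> X) \<cdot> Z" using assms(2-10) by simp
  also have "\<dots> = (P \<cdot> Q) \<cdot> Z" by (simp only: assms(1))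
  also have "\<dots> = P \<cdot> (Q \<cdot> Z)" using assms(2-10) by simp
  finally show ?thesis .
qed

lemma whisker_left_vcomp:
  assumes "\<alpha> \<in> Cell B" "\<beta> \<in> Cell B" "cod2 B \<beta> = dom2 B \<alpha>" "h \<in> Arr B" "trg1 B (dom2 B \<beta>) = src1 B h"
  shows "(id2 B h \<star> \<alpha>) \<cdot> (id2 B h \<star> \<beta>) = id2 B h \<star> (\<alpha> \<cdot> \<beta>)"
  using assms by (subst interchange') simp_all

lemma whisker_right_vcomp:
  assumes "\<alpha> \<in> Cell B" "\<beta> \<in> Cell B" "cod2 B \<beta> = dom2 B \<alpha>" "f \<in> Arr B" "trg1 B f = src1 B (dom2 B \<beta>)"
  shows "(\<alpha> \<star> id2 B f) \<cdot> (\<beta> \<star> id2 B f) = (\<alpha> \<cdot> \<beta>) \<star> id2 B f"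
  using assms by (subst interchange') simp_all

lemma whisker_left_vcomp_assoc:
  assumes "\<alpha> \<in> Cell B" "\<beta> \<in> Cell B" "cod2 B \<beta> = dom2 B \<alpha>" "h \<in> Arr B" "trg1 B (dom2 B \<beta>) = src1 B h"
    and "Z \<in> Cell B" "cod2 B Z = h \<odot> dom2 B \<beta>"
  shows "(id2 B h \<star> \<alpha>) \<cdot> ((id2 B h \<star> \<beta>) \<cdot> Z) = (id2 B h \<star> (\<alpha> \<cdot> \<beta>)) \<cdot> Z"
proof -
  have "trg1 B (dom2 B \<alpha>) = src1 B h" using assms by (metis trg_cod)
  then have "(id2 B h \<star> \<alpha>) \<cdot> ((id2 B h \<star> \<beta>) \<cdot> Z) = ((id2 B h \<star> \<alpha>) \<cdot> (id2 B h \<star> \<beta>)) \<cdot> Z"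
    using assms by (intro vassoc[symmetric]) simp_all
  then show ?thesis by (simp only: whisker_left_vcomp[OF assms(1-5)])
qed

lemma interchange_assoc:
  assumes "\<alpha> \<in> Cell B" "\<alpha>' \<in> Cell B" "\<beta> \<in> Cell B" "\<beta>' \<in> Cell B"
    and "cod2 B \<alpha> = dom2 B \<alpha>'" "cod2 B \<beta> = dom2 B \<beta>'" "trg1 B (dom2 B \<alpha>) = src1 B (dom2 B \<beta>)"
    and "Z \<in> Cell B" "cod2 B Z = dom2 B \<beta> \<odot> dom2 B \<alpha>"
  shows "(\<beta>' \<star> \<alpha>') \<cdot> ((\<beta> \<star> \<alpha>) \<cdot> Z) = ((\<beta>' \<cdot> \<beta>) \<star> (\<alpha>' \<cdot> \<alpha>)) \<cdot> Z"
proof -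
  have "trg1 B (dom2 B \<alpha>') = src1 B (dom2 B \<beta>')" using assms by (metis src_cod trg_cod)
  then have "(\<beta>' \<star> \<alpha>') \<cdot> ((\<beta> \<star> \<alpha>) \<cdot> Z) = ((\<beta>' \<star> \<alpha>') \<cdot> (\<beta> \<star> \<alpha>)) \<cdot> Z"
    using assms by (intro vassoc[symmetric]) simp_all
  then show ?thesis using interchange'[OF assms(1-7)] by simp
qed

lemma assoc_natural_right:
  assumes "h \<in> Arr B" "g \<in> Arr B" "\<alpha> \<in> Cell B" "trg1 B (dom2 B \<alpha>) = src1 B g" "trg1 B g = src1 B h"
  shows "bassoc B h g (cod2 B \<alpha>) \<cdot> (id2 B (h \<odot> g) \<star> \<alpha>) = (id2 B h \<star> (id2 B g \<star> \<alpha>)) \<cdot> bassoc B h g (dom2 B \<alpha>)"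
  using assoc_natural[of \<alpha> "id2 B g" "id2 B h"] assms by simp

lemma assoc_natural_middle:
  assumes "h \<in> Arr B" "f \<in> Arr B" "\<beta> \<in> Cell B" "trg1 B f = src1 B (dom2 B \<beta>)" "trg1 B (dom2 B \<beta>) = src1 B h"
  shows "bassoc B h (cod2 B \<beta>) f \<cdot> ((id2 B h \<star> \<beta>) \<star> id2 B f) = (id2 B h \<star> (\<beta> \<star> id2 B f)) \<cdot> bassoc B h (dom2 B \<beta>) f"
  using assoc_natural[of "id2 B f" \<beta> "id2 B h"] assms by simp

end

text \<open>This is exactly the data of one level of an element of \<open>NB(k,m)\<close>.\<close>

locale pseudo_path = bicategory B for B :: "('o, 'a, 'c, 'm) bicat_scheme" +
  fixes k :: nat and ob :: "nat \<Rightarrow> 'o" and f :: "nat \<Rightarrow> nat \<Rightarrow> 'a" and i :: "nat \<Rightarrow> nat \<Rightarrow> nat \<Rightarrow> 'c"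
  assumes arr_type: "\<And>u v. \<lbrakk>u < v; v \<le> k\<rbrakk> \<Longrightarrow> f u v \<in> Arr B \<and> src1 B (f u v) = ob u \<and> trg1 B (f u v) = ob v"
    and comparison_type: "\<And>u v w. \<lbrakk>u < v; v < w; w \<le> k\<rbrakk> \<Longrightarrow>
       iso2 B (i u v w) \<and> dom2 B (i u v w) = f v w \<odot> f u v \<and> cod2 B (i u v w) = f u w"
    and cocycle: "\<And>u v w x. \<lbrakk>u < v; v < w; w < x; x \<le> k\<rbrakk> \<Longrightarrow>
       i u w x \<cdot> ((id2 B (f w x) \<star> i u v w) \<cdot> bassoc B (f w x) (f v w) (f u v)) = i u v x \<cdot> (i v w x \<star> id2 B (f u v))"
begin

lemma arr_simps[simp]:
  "\<lbrakk>u < v; v \<le> k\<rbrakk> \<Longrightarrow> f u v \<in> Arr B" "\<lbrakk>u < v; v \<le> k\<rbrakk> \<Longrightarrow> src1 B (f u v) = ob u"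
  "\<lbrakk>u < v; v \<le> k\<rbrakk> \<Longrightarrow> trg1 B (f u v) = ob v"
  using arr_type by auto

lemma comparison_simps[simp]:
  "\<lbrakk>u < v; v < w; w \<le> k\<rbrakk> \<Longrightarrow> iso2 B (i u v w)"
  "\<lbrakk>u < v; v < w; w \<le> k\<rbrakk> \<Longrightarrow> dom2 B (i u v w) = f v w \<odot> f u v"
  "\<lbrakk>u < v; v < w; w \<le> k\<rbrakk> \<Longrightarrow> cod2 B (i u v w) = f u w"
  using comparison_type by auto

end

lemma (in bicategory) NB_level_path:
  assumes "x \<in> NB B j n" "z \<le> n"
  shows "pseudo_path B j (nobj x) (narr x z) (ncomp x z)"
  using nerve_lawsD[OF NB_laws[OF assms(1)]] assms(2) by unfold_locales simp_all

text \<open>The cocycle condition follows from the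
  pentagon axiom by induction on \<open>w\<close>.\<close>

primrec chain_comp :: "('o, 'a, 'c, 'm) bicat_scheme \<Rightarrow> (nat \<Rightarrow> 'a) \<Rightarrow> nat \<Rightarrow> nat \<Rightarrow> 'a" where
  "chain_comp B e u 0 = undefined"
| "chain_comp B e u (Suc v) =
     (if v = u then e u else if u < v then comp1 B (e v) (chain_comp B e u v) else undefined)"

primrec chain_assoc :: "('o, 'a, 'c, 'm) bicat_scheme \<Rightarrow> (nat \<Rightarrow> 'a) \<Rightarrow> nat \<Rightarrow> nat \<Rightarrow> nat \<Rightarrow> 'c" where
  "chain_assoc B e u v 0 = undefined"
| "chain_assoc B e u v (Suc w) =
     (if w = v then id2 B (comp1 B (e v) (chain_comp B e u v))
      else if v < w then vcomp B (hcomp B (id2 B (e w)) (chain_assoc B e u v w))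
        (bassoc B (e w) (chain_comp B e v w) (chain_comp B e u v))
      else undefined)"

locale chain = bicategory B for B :: "('o, 'a, 'c, 'm) bicat_scheme" +
  fixes k :: nat and ob :: "nat \<Rightarrow> 'o" and e :: "nat \<Rightarrow> 'a"
  assumes chain_type: "\<And>i. i < k \<Longrightarrow> e i \<in> Arr B \<and> src1 B (e i) = ob i \<and> trg1 B (e i) = ob (Suc i)"
begin

abbreviation F where "F \<equiv> chain_comp B e"
abbreviation I where "I \<equiv> chain_assoc B e"

lemma chain_simps[simp]:
  "i < k \<Longrightarrow> e i \<in> Arr B" "i < k \<Longrightarrow> src1 B (e i) = ob i" "i < k \<Longrightarrow> trg1 B (e i) = ob (Suc i)"
  using chain_type by auto

lemma F_type[simp]:
  "\<lbrakk>u < v; v \<le> k\<rbrakk> \<Longrightarrow> F u v \<in> Arr B \<and> src1 B (F u v) = ob u \<and> trg1 B (F u v) = ob v"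
proof (induction v)
  case (Suc v)
  then show ?case by (cases "v = u") auto
qed simp

lemma I_type[simp]:
  "\<lbrakk>u < v; v < w; w \<le> k\<rbrakk> \<Longrightarrow> iso2 B (I u v w) \<and> dom2 B (I u v w) = F v w \<odot> F u v \<and> cod2 B (I u v w) = F u w"
proof (induction w)
  case (Suc w)
  then show ?case by (cases "w = v") (auto simp: less_Suc_eq)
qed simp

text \<open>Inductive step of the cocycle condition: the case \<open>x = y + 1\<close> follows from the case
  \<open>x = y\<close> by whiskering it with \<open>e y\<close>, using naturality of the associator and the pentagon.\<close>

lemma I_cocycle_step:
  assumes uv: "u < v" and vw: "v < w" and wy: "w < y" and yk: "y < k"
    and IH: "I u w y \<cdot> ((id2 B (F w y) \<star> I u v w) \<cdot> bassoc B (F w y) (F v w) (F u v)) =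
      I u v y \<cdot> (I v w y \<star> id2 B (F u v))"
  shows "I u w (Suc y) \<cdot> ((id2 B (F w (Suc y)) \<star> I u v w) \<cdot> bassoc B (F w (Suc y)) (F v w) (F u v)) =
    I u v (Suc y) \<cdot> (I v w (Suc y) \<star> id2 B (F u v))"
proof -
  note pr = uv vw wy yk
  define h where "h = e y"
  have "I u w (Suc y) \<cdot> ((id2 B (F w (Suc y)) \<star> I u v w) \<cdot> bassoc B (F w (Suc y)) (F v w) (F u v)) =
    (id2 B h \<star> I u w y) \<cdot> (bassoc B h (F w y) (F u w) \<cdot>
      ((id2 B (h \<odot> F w y) \<star> I u v w) \<cdot> bassoc B (h \<odot> F w y) (F v w) (F u v)))"
    using pr by (simp add: h_def)
  also have "\<dots> = (id2 B h \<star> I u w y) \<cdot> ((id2 B h \<star> (id2 B (F w y) \<star> I u v w)) \<cdot>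
      (bassoc B h (F w y) (F v w \<odot> F u v) \<cdot> bassoc B (h \<odot> F w y) (F v w) (F u v)))"
    using pr vcomp_eq_postcompose[OF assoc_natural_right[of h "F w y" "I u v w"],
        of "bassoc B (h \<odot> F w y) (F v w) (F u v)"]
    by (simp add: h_def)
  also have "\<dots> = (id2 B h \<star> I u w y) \<cdot> ((id2 B h \<star> (id2 B (F w y) \<star> I u v w)) \<cdot>
      ((id2 B h \<star> bassoc B (F w y) (F v w) (F u v)) \<cdot>
       (bassoc B h (F w y \<odot> F v w) (F u v) \<cdot> (bassoc B h (F w y) (F v w) \<star> id2 B (F u v)))))"
    using pr pentagon[of "F u v" "F v w" "F w y" h] by (simp add: h_def)
  also have "\<dots> = (id2 B h \<star> (I u w y \<cdot> ((id2 B (F w y) \<star> I u v w) \<cdot> bassoc B (F w y) (F v w) (F u v)))) \<cdot>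
      (bassoc B h (F w y \<odot> F v w) (F u v) \<cdot> (bassoc B h (F w y) (F v w) \<star> id2 B (F u v)))"
    using pr by (simp add: h_def whisker_left_vcomp whisker_left_vcomp_assoc)
  also have "\<dots> = (id2 B h \<star> (I u v y \<cdot> (I v w y \<star> id2 B (F u v)))) \<cdot>
      (bassoc B h (F w y \<odot> F v w) (F u v) \<cdot> (bassoc B h (F w y) (F v w) \<star> id2 B (F u v)))"
    by (simp only: IH)
  also have "\<dots> = (id2 B h \<star> I u v y) \<cdot> ((id2 B h \<star> (I v w y \<star> id2 B (F u v))) \<cdot>
      (bassoc B h (F w y \<odot> F v w) (F u v) \<cdot> (bassoc B h (F w y) (F v w) \<star> id2 B (F u v))))"
    using pr by (simp add: h_def whisker_left_vcomp whisker_left_vcomp_assoc)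
  also have "\<dots> = (id2 B h \<star> I u v y) \<cdot> (bassoc B h (F v y) (F u v) \<cdot>
      (((id2 B h \<star> I v w y) \<star> id2 B (F u v)) \<cdot> (bassoc B h (F w y) (F v w) \<star> id2 B (F u v))))"
    using pr vcomp_eq_postcompose[OF assoc_natural_middle[of h "F u v" "I v w y"],
        of "bassoc B h (F w y) (F v w) \<star> id2 B (F u v)"]
    by (simp add: h_def)
  also have "\<dots> = I u v (Suc y) \<cdot> (I v w (Suc y) \<star> id2 B (F u v))"
    using pr by (simp add: h_def whisker_right_vcomp)
  finally show ?thesis .
qed

lemma I_cocycle:
  "\<lbrakk>u < v; v < w; w < x; x \<le> k\<rbrakk> \<Longrightarrow>
   I u w x \<cdot> ((id2 B (F w x) \<star> I u v w) \<cdot> bassoc B (F w x) (F v w) (F u v)) = I u v x \<cdot> (I v w x \<star> id2 B (F u v))"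
proof (induction x arbitrary: w)
  case (Suc y)
  show ?case
  proof (cases "w = y")
    case True
    then show ?thesis using Suc.prems by simp
  next
    case False
    then have "w < y" "y < k" using Suc.prems by simp_all
    then show ?thesis using I_cocycle_step Suc by simp
  qed
qed simp

sublocale pseudo_path B k ob F I
  by unfold_locales (simp_all add: I_cocycle)

end

subsection \<open>Extending 2-cells along two pseudo-paths\<close>

text \<open>Given two pseudo-paths \<open>(f0, i0)\<close> and \<open>(f1, i1)\<close> on the same objects and elementary
  2-cells \<open>al i : f0 i (i+1) \<Rightarrow> f1 i (i+1)\<close>, axiom (A1) forces the 2-cell on \<open>(u, v+1)\<close> to be
  \<open>i1 u v (v+1) \<cdot> (al v \<star> E u v) \<cdot> i0 u v (v+1)\<inverse>\<close>.\<close>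

primrec path_ext :: "('o, 'a, 'c, 'm) bicat_scheme \<Rightarrow> (nat \<Rightarrow> 'c) \<Rightarrow> (nat \<Rightarrow> nat \<Rightarrow> nat \<Rightarrow> 'c)
    \<Rightarrow> (nat \<Rightarrow> nat \<Rightarrow> nat \<Rightarrow> 'c) \<Rightarrow> nat \<Rightarrow> nat \<Rightarrow> 'c" where
  "path_ext B al i0 i1 u 0 = undefined"
| "path_ext B al i0 i1 u (Suc v) = (if v = u then al u else if u < v then
     vcomp B (i1 u v (Suc v)) (vcomp B (hcomp B (al v) (path_ext B al i0 i1 u v)) (inv2 B (i0 u v (Suc v))))
     else undefined)"

locale path_transformation =
  bicategory B + source: pseudo_path B k ob f0 i0 + target: pseudo_path B k ob f1 i1
  for B :: "('o, 'a, 'c, 'm) bicat_scheme" and k ob f0 i0 f1 i1 +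
  fixes al :: "nat \<Rightarrow> 'c"
  assumes step_type: "\<And>i. i < k \<Longrightarrow> al i \<in> Cell B \<and> dom2 B (al i) = f0 i (Suc i) \<and> cod2 B (al i) = f1 i (Suc i)"
begin

abbreviation E where "E \<equiv> path_ext B al i0 i1"

lemma step_simps[simp]:
  "i < k \<Longrightarrow> al i \<in> Cell B" "i < k \<Longrightarrow> dom2 B (al i) = f0 i (Suc i)" "i < k \<Longrightarrow> cod2 B (al i) = f1 i (Suc i)"
  using step_type by auto

lemma E_type[simp]: "\<lbrakk>u < v; v \<le> k\<rbrakk> \<Longrightarrow> E u v \<in> Cell B \<and> dom2 B (E u v) = f0 u v \<and> cod2 B (E u v) = f1 u v"
proof (induction v)
  case (Suc v)
  then show ?case by (cases "v = u") auto
qed simp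

text \<open>In the inductive step (from \<open>w = m\<close> to
  \<open>w = m + 1\<close>) both sides are composed with the invertible 2-cell \<open>i0 v m (m+1) \<star> 1\<close>, and the
  cocycle conditions of the two pseudo-paths are used to move it across.\<close>

lemma E_A1_step:
  assumes uv: "u < v" and vm: "v < m" and mk: "m < k"
    and IH: "i1 u v m \<cdot> (E v m \<star> E u v) = E u m \<cdot> i0 u v m"
  shows "i1 u v (Suc m) \<cdot> (E v (Suc m) \<star> E u v) = E u (Suc m) \<cdot> i0 u v (Suc m)"
proof -
  note pr = uv vm mk
  have "i1 u v (Suc m) \<cdot> ((E v (Suc m) \<star> E u v) \<cdot> (i0 v m (Suc m) \<star> id2 B (f0 u v))) =
     i1 u v (Suc m) \<cdot> ((i1 v m (Suc m) \<cdot> (al m \<star> E v m)) \<star> E u v)"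
    using pr by (simp add: interchange')
  also have "\<dots> = i1 u v (Suc m) \<cdot> ((i1 v m (Suc m) \<star> id2 B (f1 u v)) \<cdot> ((al m \<star> E v m) \<star> E u v))"
    using pr by (simp add: interchange')
  also have "\<dots> = i1 u m (Suc m) \<cdot> ((id2 B (f1 m (Suc m)) \<star> i1 u v m) \<cdot>
      (bassoc B (f1 m (Suc m)) (f1 v m) (f1 u v) \<cdot> ((al m \<star> E v m) \<star> E u v)))"
    using pr vcomp_eq_postcompose[OF target.cocycle[of u v m "Suc m", symmetric],
        of "(al m \<star> E v m) \<star> E u v"]
    by simp
  also have "\<dots> = i1 u m (Suc m) \<cdot> ((id2 B (f1 m (Suc m)) \<star> i1 u v m) \<cdot>
      ((al m \<star> (E v m \<star> E u v)) \<cdot> bassoc B (f0 m (Suc m)) (f0 v m) (f0 u v)))"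
    using pr assoc_natural[of "E u v" "E v m" "al m"] by simp
  also have "\<dots> = i1 u m (Suc m) \<cdot> ((al m \<star> (i1 u v m \<cdot> (E v m \<star> E u v))) \<cdot>
      bassoc B (f0 m (Suc m)) (f0 v m) (f0 u v))"
    using pr by (simp add: interchange_assoc)
  also have "\<dots> = i1 u m (Suc m) \<cdot> ((al m \<star> (E u m \<cdot> i0 u v m)) \<cdot> bassoc B (f0 m (Suc m)) (f0 v m) (f0 u v))"
    by (simp only: IH)
  also have "\<dots> = i1 u m (Suc m) \<cdot> ((al m \<star> E u m) \<cdot>
      ((id2 B (f0 m (Suc m)) \<star> i0 u v m) \<cdot> bassoc B (f0 m (Suc m)) (f0 v m) (f0 u v)))"
    using pr by (simp add: interchange_assoc)
  also have "\<dots> = E u (Suc m) \<cdot> (i0 u m (Suc m) \<cdot>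
      ((id2 B (f0 m (Suc m)) \<star> i0 u v m) \<cdot> bassoc B (f0 m (Suc m)) (f0 v m) (f0 u v)))"
    using pr by simp
  also have "\<dots> = E u (Suc m) \<cdot> (i0 u v (Suc m) \<cdot> (i0 v m (Suc m) \<star> id2 B (f0 u v)))"
    using source.cocycle[of u v m "Suc m"] pr by simp
  finally have "(i1 u v (Suc m) \<cdot> (E v (Suc m) \<star> E u v)) \<cdot> (i0 v m (Suc m) \<star> id2 B (f0 u v)) =
     (E u (Suc m) \<cdot> i0 u v (Suc m)) \<cdot> (i0 v m (Suc m) \<star> id2 B (f0 u v))"
    using pr by simp
  then show ?thesis
    by (rule iso_cancel_right[rotated 5]) (use pr in simp_all)
qed

lemma E_A1:
  "\<lbrakk>u < v; v < w; w \<le> k\<rbrakk> \<Longrightarrow> i1 u v w \<cdot> (E v w \<star> E u v) = E u w \<cdot> i0 u v w"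
proof (induction w arbitrary: v)
  case (Suc m)
  show ?case
  proof (cases "v = m")
    case True
    then show ?thesis using Suc.prems by simp
  next
    case False
    then have "v < m" "m < k" using Suc.prems by simp_all
    then show ?thesis using E_A1_step Suc by simp
  qed
qed simp

lemma E_unique:
  assumes type: "\<And>u v. \<lbrakk>u < v; v \<le> k\<rbrakk> \<Longrightarrow> A u v \<in> Cell B \<and> dom2 B (A u v) = f0 u v \<and> cod2 B (A u v) = f1 u v"
    and A1: "\<And>u v w. \<lbrakk>u < v; v < w; w \<le> k\<rbrakk> \<Longrightarrow> i1 u v w \<cdot> (A v w \<star> A u v) = A u w \<cdot> i0 u v w"
    and steps: "\<And>i. i < k \<Longrightarrow> A i (Suc i) = al i"
  shows "\<lbrakk>u < v; v \<le> k\<rbrakk> \<Longrightarrow> A u v = E u v"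
proof (induction v)
  case (Suc m)
  show ?case
  proof (cases "u = m")
    case True
    then show ?thesis using steps Suc.prems by simp
  next
    case False
    then have um: "u < m" and mk: "m < k" using Suc.prems by simp_all
    have "A u (Suc m) = (i1 u m (Suc m) \<cdot> (A m (Suc m) \<star> A u m)) \<cdot> inv2 B (i0 u m (Suc m))"
      using A1[of u m "Suc m"] type[of u "Suc m"] um mk by (intro iso_solve_right) simp_all
    also have "\<dots> = E u (Suc m)"
      using Suc.IH um mk steps[OF mk] type[of u m] by simp
    finally show ?thesis .
  qed
qed simp

end

lemma (in pseudo_path) path_laws:
  assumes "\<And>u. u \<le> k \<Longrightarrow> ob u \<in> Obj B"
  shows "nerve_laws B k 0 (NCell ob (\<lambda>_. f) al (\<lambda>_. i))"
  by (rule nerve_lawsI) (simp_all add: assms cocycle)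

lemma (in path_transformation) transformation_laws:
  assumes "\<And>u. u \<le> k \<Longrightarrow> ob u \<in> Obj B"
  shows "nerve_laws B k 1 (NCell ob (\<lambda>z. if z = 0 then f0 else f1) (\<lambda>_. E) (\<lambda>z. if z = 0 then i0 else i1))"
  by (rule nerve_lawsI) (auto simp: assms E_A1 source.cocycle target.cocycle)

lemma (in path_transformation) cells_of_square:
  assumes laws: "nerve_laws B k 1 y"
    and arrs: "\<And>u v. \<lbrakk>u < v; v \<le> k\<rbrakk> \<Longrightarrow> narr y 0 u v = f0 u v \<and> narr y 1 u v = f1 u v"
    and comps: "\<And>u v w. \<lbrakk>u < v; v < w; w \<le> k\<rbrakk> \<Longrightarrow> ncomp y 0 u v w = i0 u v w \<and> ncomp y 1 u v w = i1 u v w"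
    and steps: "\<And>i. i < k \<Longrightarrow> n2cell y 1 i (Suc i) = al i"
    and uv: "u < v" "v \<le> k"
  shows "n2cell y 1 u v = E u v"
proof (rule E_unique[of "n2cell y 1", OF _ _ steps uv])
  show "n2cell y 1 u v \<in> Cell B \<and> dom2 B (n2cell y 1 u v) = f0 u v \<and> cod2 B (n2cell y 1 u v) = f1 u v"
    if "u < v" "v \<le> k" for u v
    using nerve_lawsD(3)[OF laws that, of 1] arrs[OF that] by simp
  show "i1 u v w \<cdot> (n2cell y 1 v w \<star> n2cell y 1 u v) = n2cell y 1 u w \<cdot> i0 u v w"
    if "u < v" "v < w" "w \<le> k" for u v w
    using nerve_lawsD(5)[OF laws that, of 1] comps[OF that] by simp
qed

lemma (in bicategory) NB_square_transformation:
  assumes "x \<in> NB B k 1"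
  shows "path_transformation B k (nobj x) (narr x 0) (ncomp x 0) (narr x 1) (ncomp x 1) (\<lambda>i. n2cell x 1 i (Suc i))"
  by (intro path_transformation.intro path_transformation_axioms.intro bicategory_axioms NB_level_path[OF assms])
     (use nerve_lawsD(3)[OF NB_laws[OF assms]] in simp_all)

section \<open>The Segal condition in the horizontal direction\<close>

lemma horizontal_segal_in_wpb:
  assumes x: "x \<in> NB B k n"
  shows "segal_map_1 (nerve_map B) k n x \<in> wpb (NB B 1 n) (NB B 0 0) (\<lambda>y. pt (nobj y 0)) (\<lambda>y. pt (nobj y 1)) k"
proof -
  have "trim 1 n (hshift i x) \<in> NB B 1 n" if "i < k" for i
    using hface_in_NB[OF x] that by simp
  moreover have "pt (nobj x i) \<in> NB B 0 0" if "i \<le> k" for i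
    using nerve_lawsD(1)[OF NB_laws[OF x] that] by (simp add: NB_0)
  ultimately show ?thesis
    unfolding segal_map_1_eq wpb_def by (auto simp: less_Suc_eq_le simp del: upt_Suc)
qed

text \<open>Simplicial degree 0: a chain of composable 1-cells is the horizontal boundary of the
  element of \<open>NB(k,0)\<close> formed by its iterated composites.\<close>

lemma (in bicategory) horizontal_segal_surj_0:
  assumes w: "(xs, bs) \<in> wpb (NB B 1 0) (NB B 0 0) (\<lambda>y. pt (nobj y 0)) (\<lambda>y. pt (nobj y 1)) k"
  shows "(xs, bs) \<in> segal_map_1 (nerve_map B) k 0 ` NB B k 0"
proof -
  have len: "length xs = k" "length bs = Suc k"
    and xs: "\<And>i. i < k \<Longrightarrow> xs ! i \<in> NB B 1 0" and bs: "\<And>i. i \<le> k \<Longrightarrow> bs ! i \<in> NB B 0 0"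
    and ends: "\<And>i. i < k \<Longrightarrow> pt (nobj (xs ! i) 0) = bs ! i \<and> pt (nobj (xs ! i) 1) = bs ! Suc i"
    using w unfolding wpb_def by (auto simp: less_Suc_eq_le)
  define ob where "ob i = nobj (bs ! i) 0" for i
  have bs_pt: "bs ! i = pt (ob i) \<and> ob i \<in> Obj B" if "i \<le> k" for i
    using bs[OF that] unfolding ob_def NB_0 by auto
  have xs_ends: "nobj (xs ! i) 0 = ob i \<and> nobj (xs ! i) 1 = ob (Suc i)" if "i < k" for i
    using ends[OF that] bs_pt[of i] bs_pt[of "Suc i"] that by simp
  define e where "e i = narr (xs ! i) 0 0 1" for i
  interpret chain B k ob e
    by unfold_locales (use nerve_lawsD(2)[OF NB_laws[OF xs], of _ 0 1 0] xs_ends in \<open>simp add: e_def\<close>)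
  define x where "x = trim k 0 (NCell ob (\<lambda>_. F) (\<lambda>_ _ _. undefined) (\<lambda>_. I))"
  have x_NB: "x \<in> NB B k 0"
    unfolding x_def using path_laws bs_pt by (intro trim_in_NB) simp
  have "trim 1 0 (hshift i x) = xs ! i" if i: "i < k" for i
  proof -
    have "trim 1 0 (hshift i x) = trim 1 0 (xs ! i)"
      unfolding trim_eq_iff using xs_ends[OF i] i by (auto simp: x_def e_def le_Suc_eq)
    then show ?thesis using NB_trim[OF xs[OF i]] by simp
  qed
  moreover have "pt (nobj x i) = bs ! i" if "i \<le> k" for i
    using bs_pt[OF that] that by (simp add: x_def)
  ultimately have "segal_map_1 (nerve_map B) k 0 x = (xs, bs)"
    unfolding segal_map_1_eq using len by (auto intro!: nth_equalityI simp: less_Suc_eq_le simp del: upt_Suc)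
  then show ?thesis using x_NB by (metis image_eqI)
qed

lemma faces_commute:
  "\<lbrakk>i < k; c \<le> 1\<rbrakk> \<Longrightarrow> trim 1 0 (vshift c (trim 1 1 (hshift i x))) = trim 1 0 (hshift i (trim k 0 (vshift c x)))"
  by (auto simp: trim_eq_iff)

text \<open>An element of \<open>NB(k,1)\<close> is determined by its two vertical faces together with the
  elementary 2-cells \<open>\<alpha>\<^sub>u\<^sub>,\<^sub>u\<^sub>+\<^sub>1\<close>, which are recorded by its horizontal faces.\<close>

lemma (in bicategory) square_determined:
  assumes x: "x \<in> NB B k 1" and y: "y \<in> NB B k 1"
    and source: "trim k 0 x = trim k 0 y" and target: "trim k 0 (vshift 1 x) = trim k 0 (vshift 1 y)"
    and steps: "\<And>i. i < k \<Longrightarrow> n2cell x 1 i (Suc i) = n2cell y 1 i (Suc i)"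
  shows "x = y"
proof -
  interpret path_transformation B k "nobj x" "narr x 0" "ncomp x 0" "narr x 1" "ncomp x 1" "\<lambda>i. n2cell x 1 i (Suc i)"
    by (rule NB_square_transformation[OF x])
  have objs: "nobj y u = nobj x u" if "u \<le> k" for u
    using source that unfolding trim_eq_iff by auto
  have arrs: "narr y 0 u v = narr x 0 u v \<and> narr y 1 u v = narr x 1 u v" if "u < v" "v \<le> k" for u v
    using source target that unfolding trim_eq_iff by auto
  have comps: "ncomp y 0 u v w = ncomp x 0 u v w \<and> ncomp y 1 u v w = ncomp x 1 u v w"
    if "u < v" "v < w" "w \<le> k" for u v w
    using source target that unfolding trim_eq_iff by auto
  have cells: "n2cell y 1 u v = n2cell x 1 u v" if "u < v" "v \<le> k" for u v
  proof -
    have steps': "\<And>i. i < k \<Longrightarrow> n2cell y 1 i (Suc i) = n2cell x 1 i (Suc i)"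
      using steps by simp
    have "n2cell x 1 u v = E u v"
      by (rule cells_of_square[OF NB_laws[OF x] _ _ _ that]) simp_all
    moreover have "n2cell y 1 u v = E u v"
      by (rule cells_of_square[OF NB_laws[OF y] arrs comps steps' that])
    ultimately show ?thesis by simp
  qed
  have "trim k 1 x = trim k 1 y"
    unfolding trim_eq_iff using objs arrs comps cells by (auto simp: le_Suc_eq)
  then show ?thesis using x y by (simp add: NB_eq_iff)
qed

text \<open>Conversely, two elements of \<open>NB(k,0)\<close> together with a compatible row of \<open>k\<close> squares
  (elements of \<open>NB(1,1)\<close>) determine a transformation between the two pseudo-paths, and
  extending it gives an element of \<open>NB(k,1)\<close> with the prescribed faces.\<close>

locale square_boundary = bicategory B for B :: "('o, 'a, 'c, 'm) bicat_scheme" +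
  fixes k :: nat and a a' :: "('o, 'a, 'c) ncell" and xs :: "('o, 'a, 'c) ncell list"
  assumes a: "a \<in> NB B k 0" and a': "a' \<in> NB B k 0"
    and squares: "\<And>i. i < k \<Longrightarrow> xs ! i \<in> NB B 1 1"
    and objects: "\<And>u. u \<le> k \<Longrightarrow> nobj a' u = nobj a u"
    and source: "\<And>i. i < k \<Longrightarrow> trim 1 0 (xs ! i) = trim 1 0 (hshift i a)"
    and target: "\<And>i. i < k \<Longrightarrow> trim 1 0 (vshift 1 (xs ! i)) = trim 1 0 (hshift i a')"
begin

lemma square_components:
  assumes "i < k"
  shows "\<And>u. u \<le> 1 \<Longrightarrow> nobj (xs ! i) u = nobj a (i + u)"
    and "narr (xs ! i) 0 0 1 = narr a 0 i (Suc i)" "narr (xs ! i) 1 0 1 = narr a' 0 i (Suc i)"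
  using source[OF assms] target[OF assms] unfolding trim_eq_iff by auto

definition al :: "nat \<Rightarrow> 'c" where "al i = n2cell (xs ! i) 1 0 1"

lemma transformation: "path_transformation B k (nobj a) (narr a 0) (ncomp a 0) (narr a' 0) (ncomp a' 0) al"
proof (intro path_transformation.intro path_transformation_axioms.intro bicategory_axioms)
  show "pseudo_path B k (nobj a) (narr a 0) (ncomp a 0)"
    using NB_level_path[OF a] by simp
  show "pseudo_path B k (nobj a) (narr a' 0) (ncomp a' 0)"
    using NB_level_path[OF a', of 0] objects unfolding pseudo_path_def pseudo_path_axioms_def by auto
  show "al i \<in> Cell B \<and> dom2 B (al i) = narr a 0 i (Suc i) \<and> cod2 B (al i) = narr a' 0 i (Suc i)"
    if "i < k" for i
    using nerve_lawsD(3)[OF NB_laws[OF squares[OF that]], of 0 1 1] square_components[OF that]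
    by (simp add: al_def)
qed

interpretation path_transformation B k "nobj a" "narr a 0" "ncomp a 0" "narr a' 0" "ncomp a' 0" al
  by (rule transformation)

definition glued :: "('o, 'a, 'c) ncell" where
  "glued = trim k 1 (NCell (nobj a) (\<lambda>z. if z = 0 then narr a 0 else narr a' 0) (\<lambda>_. E)
     (\<lambda>z. if z = 0 then ncomp a 0 else ncomp a' 0))"

lemma glued_NB: "glued \<in> NB B k 1"
  unfolding glued_def
  by (intro trim_in_NB transformation_laws) (rule nerve_lawsD(1)[OF NB_laws[OF a]])

lemma glued_objects: "u \<le> k \<Longrightarrow> nobj glued u = nobj a u"
  by (simp add: glued_def)

lemma glued_vertical_faces: "trim k 0 glued = a" "trim k 0 (vshift 1 glued) = a'"
proof -
  have "trim k 0 glued = trim k 0 a" "trim k 0 (vshift 1 glued) = trim k 0 a'"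
    unfolding trim_eq_iff glued_def using objects by auto
  then show "trim k 0 glued = a" "trim k 0 (vshift 1 glued) = a'"
    using NB_trim[OF a] NB_trim[OF a'] by simp_all
qed

lemma glued_horizontal_faces: "i < k \<Longrightarrow> trim 1 1 (hshift i glued) = xs ! i"
proof -
  assume i: "i < k"
  have "trim 1 1 (hshift i glued) = trim 1 1 (xs ! i)"
    unfolding trim_eq_iff glued_def using square_components[OF i] i
    by (auto simp: le_Suc_eq al_def)
  then show ?thesis using NB_trim[OF squares[OF i]] by simp
qed

end

lemma (in bicategory) horizontal_faces_determine:
  assumes x: "x \<in> NB B k 1" and y: "y \<in> NB B k 1"
    and source: "trim k 0 x = trim k 0 y" and target: "trim k 0 (vshift 1 x) = trim k 0 (vshift 1 y)"
    and rows: "map (\<lambda>i. trim 1 1 (hshift i x)) [0..<k] = map (\<lambda>i. trim 1 1 (hshift i y)) [0..<k]"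
  shows "x = y"
proof (rule square_determined[OF x y source target])
  fix i assume i: "i < k"
  have "n2cell x 1 i (Suc i) = n2cell (trim 1 1 (hshift i x)) 1 0 1" by simp
  also have "\<dots> = n2cell (trim 1 1 (hshift i y)) 1 0 1"
    using rows i by (simp add: map_eq_conv)
  also have "\<dots> = n2cell y 1 i (Suc i)" by simp
  finally show "n2cell x 1 i (Suc i) = n2cell y 1 i (Suc i)" .
qed

text \<open>The target of the degree-1 part of the contractibility condition: pairs of elements
  of \<open>NB(k,0)\<close> together with a row of squares whose vertical faces are their images under
  \<open>S\<^sub>k\<close>.\<close>

definition square_boundaries :: "('o, 'a, 'c, 'm) bicat_scheme \<Rightarrow> nat
    \<Rightarrow> (('o, 'a, 'c) ncell \<times> (('o, 'a, 'c) ncell list \<times> ('o, 'a, 'c) ncell list) \<times> ('o, 'a, 'c) ncell) set" where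
  "square_boundaries B k =
     {(a, b, a'). a \<in> NB B k 0 \<and> b \<in> wpb (NB B 1 1) (NB B 0 0) (\<lambda>y. pt (nobj y 0)) (\<lambda>y. pt (nobj y 1)) k \<and>
        a' \<in> NB B k 0 \<and>
        (\<lambda>(xs, bs). (map (trim 1 0) xs, bs)) b = segal_map_1 (nerve_map B) k 0 a \<and>
        (\<lambda>(xs, bs). (map (\<lambda>y. trim 1 0 (vshift 1 y)) xs, bs)) b = segal_map_1 (nerve_map B) k 0 a'}"

abbreviation square_boundary_map :: "('o, 'a, 'c, 'm) bicat_scheme \<Rightarrow> nat \<Rightarrow> ('o, 'a, 'c) ncell
    \<Rightarrow> ('o, 'a, 'c) ncell \<times> (('o, 'a, 'c) ncell list \<times> ('o, 'a, 'c) ncell list) \<times> ('o, 'a, 'c) ncell" where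
  "square_boundary_map B k x \<equiv> (trim k 0 x, segal_map_1 (nerve_map B) k 1 x, trim k 0 (vshift 1 x))"

lemma (in bicategory) square_boundary_map_inj: "inj_on (square_boundary_map B k) (NB B k 1)"
proof (rule inj_onI)
  fix x y assume x: "x \<in> NB B k 1" and y: "y \<in> NB B k 1"
    and "square_boundary_map B k x = square_boundary_map B k y"
  then have "trim k 0 x = trim k 0 y" "trim k 0 (vshift 1 x) = trim k 0 (vshift 1 y)"
    "map (\<lambda>i. trim 1 1 (hshift i x)) [0..<k] = map (\<lambda>i. trim 1 1 (hshift i y)) [0..<k]"
    by (simp_all only: prod.inject segal_map_1_eq)
  then show "x = y" by (rule horizontal_faces_determine[OF x y])
qed

lemma square_boundary_map_into:
  assumes x: "x \<in> NB B k 1"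
  shows "square_boundary_map B k x \<in> square_boundaries B k"
proof -
  have "trim k 0 x \<in> NB B k 0" "trim k 0 (vshift 1 x) \<in> NB B k 0"
    using vface_in_NB[OF x, of 0 0] vface_in_NB[OF x, of 1 0] by simp_all
  moreover have "map (trim 1 0) (map (\<lambda>i. trim 1 1 (hshift i x)) [0..<k]) =
      map (\<lambda>i. trim 1 0 (hshift i (trim k 0 x))) [0..<k]"
    using faces_commute[of _ k 0 x] by simp
  moreover have "map (\<lambda>y. trim 1 0 (vshift 1 y)) (map (\<lambda>i. trim 1 1 (hshift i x)) [0..<k]) =
      map (\<lambda>i. trim 1 0 (hshift i (trim k 0 (vshift 1 x)))) [0..<k]"
    using faces_commute[of _ k 1 x] by simp
  ultimately show ?thesis
    unfolding square_boundaries_def using horizontal_segal_in_wpb[OF x]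
    by (simp add: segal_map_1_eq del: upt_Suc)
qed

lemma (in bicategory) square_boundary_map_onto:
  assumes "(a, (xs, bs), a') \<in> square_boundaries B k"
  shows "(a, (xs, bs), a') \<in> square_boundary_map B k ` NB B k 1"
proof -
  have a: "a \<in> NB B k 0" and a': "a' \<in> NB B k 0"
    and w: "(xs, bs) \<in> wpb (NB B 1 1) (NB B 0 0) (\<lambda>y. pt (nobj y 0)) (\<lambda>y. pt (nobj y 1)) k"
    and s: "(map (trim 1 0) xs, bs) = segal_map_1 (nerve_map B) k 0 a"
    and t: "(map (\<lambda>y. trim 1 0 (vshift 1 y)) xs, bs) = segal_map_1 (nerve_map B) k 0 a'"
    using assms unfolding square_boundaries_def by simp_all
  have len: "length xs = k" and xs: "\<And>i. i < k \<Longrightarrow> xs ! i \<in> NB B 1 1"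
    using w unfolding wpb_def by auto
  have bs: "bs = map (\<lambda>i. pt (nobj a i)) [0..<Suc k]" "bs = map (\<lambda>i. pt (nobj a' i)) [0..<Suc k]"
    and rows: "map (trim 1 0) xs = map (\<lambda>i. trim 1 0 (hshift i a)) [0..<k]"
      "map (\<lambda>y. trim 1 0 (vshift 1 y)) xs = map (\<lambda>i. trim 1 0 (hshift i a')) [0..<k]"
    using s t by (simp_all only: prod.inject segal_map_1_eq)
  interpret square_boundary B k a a' xs
  proof
    show "nobj a' u = nobj a u" if "u \<le> k" for u
    proof -
      have "bs ! u = pt (nobj a u)" "bs ! u = pt (nobj a' u)"
        using bs that by (simp_all del: upt_Suc)
      then show ?thesis by simp
    qed
    fix i assume i: "i < k"
    have "map (trim 1 0) xs ! i = map (\<lambda>i. trim 1 0 (hshift i a)) [0..<k] ! i"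
      "map (\<lambda>y. trim 1 0 (vshift 1 y)) xs ! i = map (\<lambda>i. trim 1 0 (hshift i a')) [0..<k] ! i"
      using rows by simp_all
    then show "trim 1 0 (xs ! i) = trim 1 0 (hshift i a)" "trim 1 0 (vshift 1 (xs ! i)) = trim 1 0 (hshift i a')"
      using i len by simp_all
  qed (use a a' xs in auto)
  have "map (\<lambda>i. trim 1 1 (hshift i glued)) [0..<k] = xs"
    using len glued_horizontal_faces by (intro nth_equalityI) simp_all
  moreover have "map (\<lambda>i. pt (nobj glued i)) [0..<Suc k] = bs"
    unfolding bs(1) by (rule map_cong) (auto simp: glued_objects)
  ultimately have "square_boundary_map B k glued = (a, (xs, bs), a')"
    using glued_vertical_faces by (simp add: segal_map_1_eq del: upt_Suc)
  then show ?thesis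
    by (rule image_eqI[OF sym glued_NB])
qed

theorem (in bicategory) segal_cond_1_nerve: "segal_cond_1 (NB B) (nerve_map B) k"
proof -
  let ?W = "\<lambda>n. wpb (NB B 1 n) (NB B 0 0) (\<lambda>y. pt (nobj y 0)) (\<lambda>y. pt (nobj y 1)) k"
  have "segal_map_1 (nerve_map B) k 0 ` NB B k 0 = ?W 0"
  proof
    show "segal_map_1 (nerve_map B) k 0 ` NB B k 0 \<subseteq> ?W 0"
      by (rule image_subsetI) (rule horizontal_segal_in_wpb)
    show "?W 0 \<subseteq> segal_map_1 (nerve_map B) k 0 ` NB B k 0"
    proof
      fix w assume "w \<in> ?W 0"
      then show "w \<in> segal_map_1 (nerve_map B) k 0 ` NB B k 0"
        using horizontal_segal_surj_0[of "fst w" "snd w"] by simp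
    qed
  qed
  moreover have "bij_betw (square_boundary_map B k) (NB B k 1) (square_boundaries B k)"
    unfolding bij_betw_def
  proof (intro conjI equalityI)
    show "inj_on (square_boundary_map B k) (NB B k 1)" by (rule square_boundary_map_inj)
    show "square_boundary_map B k ` NB B k 1 \<subseteq> square_boundaries B k"
      by (rule image_subsetI) (rule square_boundary_map_into)
    show "square_boundaries B k \<subseteq> square_boundary_map B k ` NB B k 1"
    proof
      fix t assume t: "t \<in> square_boundaries B k"
      obtain a xs bs a' where "t = (a, (xs, bs), a')" by (cases t) auto
      then show "t \<in> square_boundary_map B k ` NB B k 1"
        using square_boundary_map_onto t by simp
    qed
  qed
  ultimately show ?thesis
    unfolding segal_cond_1_def contractible_def vertical_faces horizontal_faces square_boundaries_def
    by (rule conjI)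
qed

theorem mainTheorem17:
  fixes B :: "('o, 'a, 'c, 'm) bicat_scheme"
  assumes "bicategory B"
  shows "(\<forall>k. segal_cond_1 (NB B) (nerve_map B) k) \<and>
         (\<forall>j k. segal_cond_2 (NB B) (nerve_map B) j k)"
  using bicategory.segal_cond_1_nerve[OF assms] segal_cond_2_nerve by blast

end
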